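(* Let $\mathcal{A}$ be a finite list of elements of $\Gamma=\mathbb{Z}^\ell$ and let $k$ be a positive divisor of $\rho_{\mathcal{A}}$. Then the $k$-constituent of the characteristic quasi-polynomial of $\mathcal{A}$, i.e. the polynomial $f_k(t)$ such that $f_k(q)=\#\mathcal{M}(\mathcal{A};\mathbb{Z}^\ell,\mathbb{Z}/q\mathbb{Z})$ for every positive integer $q\equiv k\pmod{\rho_{\mathcal{A}}}$, satisfies $$f_k(t)=\chi^{\mathbb{Z}/k\mathbb{Z}}_{\mathcal{A}}(t).$$
   Context: $\mathcal{M}(\mathcal{A};\mathbb{Z}^\ell,G)=\mathrm{Hom}(\mathbb{Z}^\ell,G)\smallsetminus\bigcup_{\alpha\in\mathcal{A}}\{\varphi\mid\varphi(\alpha)=0\}\cong\{x\in G^\ell\mid \alpha(x)\ne0\ \forall\alpha\in\mathcal{A}\}$. For a sublist $\mathcal{S}$ (sublists distinguished by index), write $(\mathbb{Z}^\ell/\langle\mathcal{S}\rangle)_{\mathrm{tor}}\simeq\bigoplus_i\mathbb{Z}/d_{\mathcal{S},i}\mathbb{Z}$ with $d_{\mathcal{S},i}\mid d_{\mathcal{S},i+1}$; $\rho_{\mathcal{A}}$ is the lcm of the largest such $d_{\mathcal{S},i}$ over all $\mathcal{S}\subset\mathcal{A}$. It is known (Kamiya–Takemura–Terao) that $q\mapsto\#\mathcal{M}(\mathcal{A};\mathbb{Z}^\ell,\mathbb{Z}/q\mathbb{Z})$ is a quasi-polynomial with period $\rho_{\mathcal{A}}$, so the polynomials $f_k$ exist.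 $r_{\mathcal{S}}$ is the rank of $\langle\mathcal{S}\rangle$, $m(\mathcal{S};G)=\#\mathrm{Hom}((\mathbb{Z}^\ell/\langle\mathcal{S}\rangle)_{\mathrm{tor}},G)$ and $\chi^G_{\mathcal{A}}(t)=\sum_{\mathcal{S}\subset\mathcal{A}}(-1)^{\#\mathcal{S}}m(\mathcal{S};G)t^{\ell-r_{\mathcal{S}}}$. *)

theory Defs
  imports "HOL-Algebra.Elementary_Groups" "HOL-Algebra.Generated_Groups" "HOL-Algebra.Coset"
begin

text \<open>The lattice Gamma = Z^l, elements represented as integer lists of length l,
  as an (additive, written multiplicatively) HOL-Algebra group.\<close>
definition Zl :: "nat \<Rightarrow> int list monoid" where
  "Zl l = \<lparr>carrier = {x. length x = l}, mult = (\<lambda>x y. map2 (+) x y),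
           one = replicate l 0\<rparr>"

text \<open>The subgroup generated by the sublist S of A given by the index set I.\<close>
definition lat_span :: "nat \<Rightarrow> int list list \<Rightarrow> nat set \<Rightarrow> int list set" where
  "lat_span l A I = generate (Zl l) ((\<lambda>i. A ! i) ` I)"

text \<open>Preimage in Z^l of the torsion part of Z^l / <S>.\<close>
definition tor_part :: "nat \<Rightarrow> int list list \<Rightarrow> nat set \<Rightarrow> int list set" where
  "tor_part l A I = {x \<in> carrier (Zl l). \<exists>n::nat. n > 0 \<and> x [^]\<^bsub>Zl l\<^esub> n \<in> lat_span l A I}"

definition tor_group :: "nat \<Rightarrow> int list list \<Rightarrow> nat set \<Rightarrow> int list set monoid" where
  "tor_group l A I = ((Zl l)\<lparr>carrier := tor_part l A I\<rparr>) Mod (lat_span l A I)"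

text \<open>Exponent of a finite group = largest invariant factor d_{S,max} (1 for the trivial group).\<close>
definition grp_exponent :: "('a, 'b) monoid_scheme \<Rightarrow> nat" where
  "grp_exponent G = (LEAST n. n > 0 \<and> (\<forall>x \<in> carrier G. x [^]\<^bsub>G\<^esub> n = \<one>\<^bsub>G\<^esub>))"

definition rho :: "nat \<Rightarrow> int list list \<Rightarrow> nat" where
  "rho l A = Lcm {grp_exponent (tor_group l A I) | I. I \<subseteq> {..<length A}}"

definition m_hom :: "nat \<Rightarrow> int list list \<Rightarrow> nat set \<Rightarrow> nat \<Rightarrow> nat" where
  "m_hom l A I k = card (hom (tor_group l A I) (integer_mod_group k)
                         \<inter> extensional (carrier (tor_group l A I)))"

definition lin_indep_Z :: "nat \<Rightarrow> int list set \<Rightarrow> bool" where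
  "lin_indep_Z l X \<longleftrightarrow> finite X \<and>
     (\<forall>c :: int list \<Rightarrow> int. (\<forall>i<l. (\<Sum>x\<in>X. c x * x ! i) = 0) \<longrightarrow> (\<forall>x\<in>X. c x = 0))"

definition rank_S :: "nat \<Rightarrow> int list list \<Rightarrow> nat set \<Rightarrow> nat" where
  "rank_S l A I = Max {card X | X. X \<subseteq> lat_span l A I \<and> lin_indep_Z l X}"

definition chi :: "nat \<Rightarrow> int list list \<Rightarrow> nat \<Rightarrow> int \<Rightarrow> int" where
  "chi l A k t = (\<Sum>I \<in> Pow {..<length A}.
       (-1) ^ card I * int (m_hom l A I k) * t ^ (l - rank_S l A I))"

text \<open>#M(A; Z^l, Z/qZ), identifying Hom(Z^l, Z/qZ) with (Z/qZ)^l.\<close>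
definition M_card :: "nat \<Rightarrow> int list list \<Rightarrow> nat \<Rightarrow> nat" where
  "M_card l A q = card {x :: int list. length x = l \<and> set x \<subseteq> {0..<int q} \<and>
       (\<forall>a \<in> set A. (\<Sum>i<l. a ! i * x ! i) mod int q \<noteq> 0)}"

end

theory Submission
  imports Defs
begin

text \<open>
  Every subgroup L of \<open>\<int>\<^sup>l\<close> is carried by a lattice automorphism onto a diagonal lattice
  \<open>d\<^sub>1\<int> \<times> \<dots> \<times> d\<^sub>l\<int>\<close> (Smith normal form). Counting then splits coordinatewise: the number of
  \<open>x \<in> (\<int>/q)\<^sup>l\<close> orthogonal to L mod q is \<open>\<Prod> gcd(d\<^sub>i, q)\<close> over the indices with \<open>d\<^sub>i \<noteq> 0\<close>,
  times \<open>q\<close> for each of the \<open>l - rank L\<close> indices with \<open>d\<^sub>i = 0\<close>; and \<open>Hom((\<int>\<^sup>l/L)\<^sub>t\<^sub>o\<^sub>r, \<int>/k)\<close> has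
  \<open>\<Prod> gcd(d\<^sub>i, k)\<close> elements. Every nonzero \<open>d\<^sub>i\<close> divides the exponent of the torsion group, hence
  \<open>\<rho>\<close>, so \<open>q \<equiv> k (mod \<rho>)\<close> gives \<open>gcd(d\<^sub>i, q) = gcd(d\<^sub>i, k)\<close>. Inclusion-exclusion over the
  sublists of A finishes the proof.
\<close>

section \<open>Integer vectors and linear maps\<close>

definition vec_add :: "int list \<Rightarrow> int list \<Rightarrow> int list" where
  "vec_add x y = map2 (+) x y"
definition vec_neg :: "int list \<Rightarrow> int list" where "vec_neg x = map uminus x"
definition vec_smult :: "int \<Rightarrow> int list \<Rightarrow> int list" where "vec_smult c x = map ((*) c) x"
definition zero_vec :: "nat \<Rightarrow> int list" where "zero_vec l = replicate l 0"
definition unit_vec :: "nat \<Rightarrow> nat \<Rightarrow> int list" where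
  "unit_vec l i = map (\<lambda>j. if j = i then 1 else 0) [0..<l]"

lemma length_vec_add[simp]: "length (vec_add x y) = min (length x) (length y)"
  by (simp add: vec_add_def)
lemma nth_vec_add[simp]: "i < length x \<Longrightarrow> i < length y \<Longrightarrow> vec_add x y ! i = x!i + y!i"
  by (simp add: vec_add_def)
lemma vec_add_Cons[simp]: "vec_add (a # xs) (b # ys) = (a + b) # vec_add xs ys"
  by (simp add: vec_add_def)
lemma length_vec_neg[simp]: "length (vec_neg x) = length x" by (simp add: vec_neg_def)
lemma nth_vec_neg[simp]: "i < length x \<Longrightarrow> vec_neg x ! i = - x!i" by (simp add: vec_neg_def)
lemma length_vec_smult[simp]: "length (vec_smult c x) = length x" by (simp add: vec_smult_def)
lemma nth_vec_smult[simp]: "i < length x \<Longrightarrow> vec_smult c x ! i = c * x!i"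
  by (simp add: vec_smult_def)
lemma length_zero_vec[simp]: "length (zero_vec l) = l" by (simp add: zero_vec_def)
lemma nth_zero_vec[simp]: "i < l \<Longrightarrow> zero_vec l ! i = 0" by (simp add: zero_vec_def)
lemma zero_vec_Suc: "zero_vec (Suc l) = 0 # zero_vec l" by (simp add: zero_vec_def)
lemma length_unit_vec[simp]: "length (unit_vec l i) = l" by (simp add: unit_vec_def)
lemma nth_unit_vec[simp]: "j < l \<Longrightarrow> unit_vec l i ! j = (if j = i then 1 else 0)"
  by (simp add: unit_vec_def)

lemma vec_smult_Suc: "vec_smult (int (Suc n)) x = vec_add (vec_smult (int n) x) x"
  by (rule nth_equalityI) (auto simp: algebra_simps)

lemma vec_smult_neg: "c < 0 \<Longrightarrow> vec_smult c x = vec_neg (vec_smult (int (nat (- c))) x)"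
  by (rule nth_equalityI) auto

definition zlinear :: "nat \<Rightarrow> (int list \<Rightarrow> int list) \<Rightarrow> bool" where
  "zlinear l f \<longleftrightarrow> (\<forall>x. length x = l \<longrightarrow> length (f x) = l) \<and>
     (\<forall>x y. length x = l \<longrightarrow> length y = l \<longrightarrow> f (vec_add x y) = vec_add (f x) (f y))"

lemma zlinear_length: "zlinear l f \<Longrightarrow> length x = l \<Longrightarrow> length (f x) = l"
  by (simp add: zlinear_def)
lemma zlinear_add:
  "zlinear l f \<Longrightarrow> length x = l \<Longrightarrow> length y = l \<Longrightarrow> f (vec_add x y) = vec_add (f x) (f y)"
  by (simp add: zlinear_def)

lemma zlinear_zero:
  assumes "zlinear l f"
  shows "f (zero_vec l) = zero_vec l"
proof -
  have "zero_vec l = vec_add (zero_vec l) (zero_vec l)" by (rule nth_equalityI) auto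
  then have sum: "f (zero_vec l) = vec_add (f (zero_vec l)) (f (zero_vec l))"
    using zlinear_add[OF assms] by (metis length_zero_vec)
  have len: "length (f (zero_vec l)) = l" using zlinear_length[OF assms] by simp
  show ?thesis
  proof (rule nth_equalityI)
    fix i assume "i < length (f (zero_vec l))"
    then have "f (zero_vec l) ! i = f (zero_vec l) ! i + f (zero_vec l) ! i"
      using arg_cong[OF sum, of "\<lambda>v. v ! i"] len by simp
    then show "f (zero_vec l) ! i = zero_vec l ! i" using len \<open>i < length (f (zero_vec l))\<close> by simp
  qed (simp add: len)
qed

lemma zlinear_neg:
  assumes f: "zlinear l f" and x: "length x = l"
  shows "f (vec_neg x) = vec_neg (f x)"
proof -
  have "vec_add x (vec_neg x) = zero_vec l" using x by (intro nth_equalityI) auto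
  moreover have "f (vec_add x (vec_neg x)) = vec_add (f x) (f (vec_neg x))"
    using zlinear_add[OF f x] x by simp
  ultimately have sum: "vec_add (f x) (f (vec_neg x)) = zero_vec l"
    using zlinear_zero[OF f] by simp
  have len: "length (f x) = l" "length (f (vec_neg x)) = l" using zlinear_length[OF f] x by auto
  show ?thesis
  proof (rule nth_equalityI)
    fix i assume "i < length (f (vec_neg x))"
    then show "f (vec_neg x) ! i = vec_neg (f x) ! i"
      using arg_cong[OF sum, of "\<lambda>v. v ! i"] len by simp
  qed (simp add: len)
qed

lemma zlinear_smult_nat:
  assumes f: "zlinear l f" and x: "length x = l"
  shows "f (vec_smult (int n) x) = vec_smult (int n) (f x)"
proof (induction n)
  case 0
  have "vec_smult (int 0) x = zero_vec l" "vec_smult (int 0) (f x) = zero_vec l"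
    using x zlinear_length[OF f x] by (auto intro: nth_equalityI)
  then show ?case using zlinear_zero[OF f] by simp
next
  case (Suc n)
  then show ?case using vec_smult_Suc zlinear_add[OF f] x by simp
qed

lemma zlinear_smult:
  assumes f: "zlinear l f" and x: "length x = l"
  shows "f (vec_smult c x) = vec_smult c (f x)"
proof (cases "c \<ge> 0")
  case True
  then show ?thesis using zlinear_smult_nat[OF assms, of "nat c"] by simp
next
  case False
  then have "f (vec_smult c x) = f (vec_neg (vec_smult (int (nat (- c))) x))"
    by (simp add: vec_smult_neg)
  also have "\<dots> = vec_neg (vec_smult (int (nat (- c))) (f x))"
    using zlinear_neg[OF f, of "vec_smult (int (nat (- c))) x"] zlinear_smult_nat[OF assms] x
    by (simp only: length_vec_smult)
  also have "\<dots> = vec_smult c (f x)" using False by (simp add: vec_smult_neg)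
  finally show ?thesis .
qed

definition vec_truncate :: "nat \<Rightarrow> nat \<Rightarrow> int list \<Rightarrow> int list" where
  "vec_truncate l n b = map (\<lambda>i. if i < n then b!i else 0) [0..<l]"

lemma length_vec_truncate[simp]: "length (vec_truncate l n b) = l" by (simp add: vec_truncate_def)
lemma vec_truncate_0: "vec_truncate l 0 b = zero_vec l"
  by (rule nth_equalityI) (auto simp: vec_truncate_def)
lemma vec_truncate_full: "length b = l \<Longrightarrow> vec_truncate l l b = b"
  by (rule nth_equalityI) (auto simp: vec_truncate_def)
lemma vec_truncate_Suc:
  "n < l \<Longrightarrow> vec_truncate l (Suc n) b = vec_add (vec_truncate l n b) (vec_smult (b!n) (unit_vec l n))"
  by (rule nth_equalityI) (auto simp: vec_truncate_def less_Suc_eq)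

lemma zlinear_nth:
  assumes f: "zlinear l f" and y: "length y = l" and i: "i < l"
  shows "f y ! i = (\<Sum>j<l. y!j * f (unit_vec l j) ! i)"
proof -
  have "n \<le> l \<Longrightarrow> f (vec_truncate l n y) ! i = (\<Sum>j<n. y!j * f (unit_vec l j) ! i)" for n
  proof (induction n)
    case 0
    then show ?case using zlinear_zero[OF f] i by (simp add: vec_truncate_0)
  next
    case (Suc n)
    then have "f (vec_truncate l (Suc n) y) =
        vec_add (f (vec_truncate l n y)) (vec_smult (y!n) (f (unit_vec l n)))"
      using vec_truncate_Suc zlinear_add[OF f] zlinear_smult[OF f] by simp
    then show ?case using Suc i zlinear_length[OF f] by simp
  qed
  from this[of l] show ?thesis using vec_truncate_full[OF y] by simp
qed

definition zlin_iso :: "nat \<Rightarrow> (int list \<Rightarrow> int list) \<Rightarrow> (int list \<Rightarrow> int list) \<Rightarrow> bool" where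
  "zlin_iso l f g \<longleftrightarrow> zlinear l f \<and> zlinear l g \<and> (\<forall>x. length x = l \<longrightarrow> g (f x) = x \<and> f (g x) = x)"

lemma zlin_iso_sym: "zlin_iso l f g \<Longrightarrow> zlin_iso l g f" by (auto simp: zlin_iso_def)

lemma zlinear_comp: "zlinear l f \<Longrightarrow> zlinear l h \<Longrightarrow> zlinear l (h \<circ> f)"
  by (simp add: zlinear_def)

lemma zlin_iso_comp: "zlin_iso l f g \<Longrightarrow> zlin_iso l h h' \<Longrightarrow> zlin_iso l (h \<circ> f) (g \<circ> h')"
  unfolding zlin_iso_def by (auto simp: zlinear_comp zlinear_length)

lemma zlin_iso_id: "zlin_iso l id id" by (simp add: zlin_iso_def zlinear_def)

section \<open>Subgroups of \<open>\<int>\<^sup>l\<close> and their diagonalization\<close>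

definition int_lattice :: "nat \<Rightarrow> int list set \<Rightarrow> bool" where
  "int_lattice l L \<longleftrightarrow> (\<forall>x\<in>L. length x = l) \<and> zero_vec l \<in> L \<and>
     (\<forall>x\<in>L. \<forall>y\<in>L. vec_add x y \<in> L) \<and> (\<forall>x\<in>L. vec_neg x \<in> L)"

lemma int_lattice_length: "int_lattice l L \<Longrightarrow> x \<in> L \<Longrightarrow> length x = l" by (simp add: int_lattice_def)
lemma int_lattice_zero: "int_lattice l L \<Longrightarrow> zero_vec l \<in> L" by (simp add: int_lattice_def)
lemma int_lattice_add: "int_lattice l L \<Longrightarrow> x \<in> L \<Longrightarrow> y \<in> L \<Longrightarrow> vec_add x y \<in> L"
  by (simp add: int_lattice_def)
lemma int_lattice_neg: "int_lattice l L \<Longrightarrow> x \<in> L \<Longrightarrow> vec_neg x \<in> L" by (simp add: int_lattice_def)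

lemma int_lattice_smult_nat:
  assumes "int_lattice l L" "x \<in> L"
  shows "vec_smult (int n) x \<in> L"
proof (induction n)
  case 0
  have "vec_smult (int 0) x = zero_vec l" using int_lattice_length[OF assms]
    by (intro nth_equalityI) auto
  then show ?case using int_lattice_zero[OF assms(1)] by simp
next
  case (Suc n)
  then show ?case using vec_smult_Suc int_lattice_add[OF assms(1)] assms(2) by simp
qed

lemma int_lattice_smult:
  assumes "int_lattice l L" "x \<in> L"
  shows "vec_smult c x \<in> L"
proof (cases "c \<ge> 0")
  case True
  then show ?thesis using int_lattice_smult_nat[OF assms, of "nat c"] by simp
next
  case False
  then show ?thesis
    using int_lattice_neg[OF assms(1) int_lattice_smult_nat[OF assms, of "nat (- c)"]]
      by (simp only: vec_smult_neg)
qed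

lemma int_lattice_image:
  assumes L: "int_lattice l L" and f: "zlinear l f"
  shows "int_lattice l (f ` L)"
  unfolding int_lattice_def
proof (intro conjI ballI)
  show "zero_vec l \<in> f ` L" using zlinear_zero[OF f] int_lattice_zero[OF L] by (metis image_eqI)
next
  fix x assume "x \<in> f ` L"
  then show "length x = l" using int_lattice_length[OF L] zlinear_length[OF f] by auto
next
  fix x y assume "x \<in> f ` L" "y \<in> f ` L"
  then obtain a b where "a \<in> L" "b \<in> L" "x = f a" "y = f b" by auto
  then show "vec_add x y \<in> f ` L"
    using zlinear_add[OF f] int_lattice_length[OF L] int_lattice_add[OF L] by (metis image_eqI)
next
  fix x assume "x \<in> f ` L"
  then obtain a where "a \<in> L" "x = f a" by auto
  then show "vec_neg x \<in> f ` L"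
    using zlinear_neg[OF f] int_lattice_length[OF L] int_lattice_neg[OF L] by (metis image_eqI)
qed

lemma int_lattice_Cons_zero:
  assumes "int_lattice (Suc l) M"
  shows "int_lattice l {xs. 0 # xs \<in> M}"
  unfolding int_lattice_def
proof (intro conjI ballI)
  show "zero_vec l \<in> {xs. 0 # xs \<in> M}" using int_lattice_zero[OF assms] zero_vec_Suc by simp
next
  fix x assume "x \<in> {xs. 0 # xs \<in> M}"
  then show "length x = l" "vec_neg x \<in> {xs. 0 # xs \<in> M}"
    using int_lattice_length[OF assms] int_lattice_neg[OF assms] by (fastforce simp: vec_neg_def)+
next
  fix x y assume "x \<in> {xs. 0 # xs \<in> M}" "y \<in> {xs. 0 # xs \<in> M}"
  then show "vec_add x y \<in> {xs. 0 # xs \<in> M}" using int_lattice_add[OF assms] by fastforce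
qed

definition diag_lattice :: "nat \<Rightarrow> nat list \<Rightarrow> int list set" where
  "diag_lattice l d = {x. length x = l \<and> (\<forall>i<l. int (d!i) dvd x!i)}"

definition swap0 :: "nat \<Rightarrow> int list \<Rightarrow> int list" where
  "swap0 j x = x[0 := x!j, j := x!0]"

lemma length_swap0[simp]: "length (swap0 j x) = length x" by (simp add: swap0_def)

lemma nth_swap0: "j < length x \<Longrightarrow> i < length x \<Longrightarrow>
   swap0 j x ! i = (if i = j then x!0 else if i = 0 then x!j else x!i)"
  by (cases x) (auto simp: swap0_def nth_list_update nth_Cons split: nat.splits)

lemma nth_swap0_0: "j < length x \<Longrightarrow> swap0 j x ! 0 = x!j"
  using nth_swap0[of j x 0] by (cases "j = 0") (auto, cases x, auto)

lemma nth_swap0_j: "j < length x \<Longrightarrow> swap0 j x ! j = x!0"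
  using nth_swap0[of j x j] by (cases "j = 0") auto

lemma zlinear_swap0:
  assumes "j < l"
  shows "zlinear l (swap0 j)"
  unfolding zlinear_def
proof (intro conjI allI impI)
  fix x y :: "int list" assume "length x = l" "length y = l"
  then show "swap0 j (vec_add x y) = vec_add (swap0 j x) (swap0 j y)"
    using assms by (intro nth_equalityI) (auto simp: nth_swap0)
qed simp

lemma swap0_swap0: "j < length x \<Longrightarrow> swap0 j (swap0 j x) = x"
  by (intro nth_equalityI) (auto simp: nth_swap0 nth_swap0_0 nth_swap0_j)

lemma zlin_iso_swap0: "j < l \<Longrightarrow> zlin_iso l (swap0 j) (swap0 j)"
  by (simp add: zlin_iso_def zlinear_swap0 swap0_swap0)

definition shear :: "int list \<Rightarrow> int list \<Rightarrow> int list" where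
  "shear c x = hd x # vec_add (tl x) (vec_smult (hd x) c)"

lemma hd_shear[simp]: "hd (shear c x) = hd x" by (simp add: shear_def)

lemma zlinear_shear:
  assumes "length c = l"
  shows "zlinear (Suc l) (shear c)"
  unfolding zlinear_def
proof (intro conjI allI impI)
  fix x :: "int list" assume "length x = Suc l"
  then show "length (shear c x) = Suc l" using assms by (cases x) (auto simp: shear_def)
next
  fix x y :: "int list" assume "length x = Suc l" "length y = Suc l"
  then obtain a xs b ys where x: "x = a # xs" "length xs = l" and y: "y = b # ys" "length ys = l"
    by (metis length_Suc_conv)
  have "vec_add (vec_add xs ys) (vec_smult (a + b) c) =
        vec_add (vec_add xs (vec_smult a c)) (vec_add ys (vec_smult b c))"
    using x y assms by (intro nth_equalityI) (auto simp: algebra_simps)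
  then show "shear c (vec_add x y) = vec_add (shear c x) (shear c y)" using x y
    by (simp add: shear_def)
qed

lemma shear_inverse:
  assumes "length c = l" "length x = Suc l"
  shows "shear (vec_neg c) (shear c x) = x"
proof -
  obtain a xs where x: "x = a # xs" "length xs = l" using assms(2) by (metis length_Suc_conv)
  have "vec_add (vec_add xs (vec_smult a c)) (vec_smult a (vec_neg c)) = xs"
    using x assms by (intro nth_equalityI) auto
  then show ?thesis using x by (simp add: shear_def)
qed

lemma zlin_iso_shear:
  assumes "length c = l"
  shows "zlin_iso (Suc l) (shear c) (shear (vec_neg c))"
proof -
  have "vec_neg (vec_neg c) = c" by (intro nth_equalityI) auto
  then show ?thesis
    unfolding zlin_iso_def using zlinear_shear assms shear_inverse[of "vec_neg c" l] shear_inverse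
    by (metis length_vec_neg)
qed

definition lift :: "(int list \<Rightarrow> int list) \<Rightarrow> int list \<Rightarrow> int list" where
  "lift f x = hd x # f (tl x)"

lemma zlinear_lift:
  assumes "zlinear l f"
  shows "zlinear (Suc l) (lift f)"
  unfolding zlinear_def
proof (intro conjI allI impI)
  fix x :: "int list" assume "length x = Suc l"
  then show "length (lift f x) = Suc l"
    using zlinear_length[OF assms] by (cases x) (auto simp: lift_def)
next
  fix x y :: "int list" assume "length x = Suc l" "length y = Suc l"
  then obtain a xs b ys where "x = a # xs" "length xs = l" "y = b # ys" "length ys = l"
    by (metis length_Suc_conv)
  then show "lift f (vec_add x y) = vec_add (lift f x) (lift f y)"
    using zlinear_add[OF assms] by (simp add: lift_def)
qed

lemma zlin_iso_lift: "zlin_iso l f g \<Longrightarrow> zlin_iso (Suc l) (lift f) (lift g)"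
  unfolding zlin_iso_def by (auto simp: zlinear_lift lift_def zlinear_length length_Suc_conv)

definition min_first_coord :: "nat \<Rightarrow> int list set \<Rightarrow> int list \<Rightarrow> bool" where
  "min_first_coord l M w \<longleftrightarrow> w \<in> M \<and> w ! 0 \<noteq> 0 \<and>
     (\<forall>h h' y. zlin_iso l h h' \<longrightarrow> y \<in> M \<longrightarrow> h y ! 0 \<noteq> 0 \<longrightarrow> \<bar>w ! 0\<bar> \<le> \<bar>h y ! 0\<bar>)"

lemma exists_min_first_coord:
  assumes L: "int_lattice (Suc l) L" and v: "v \<in> L" "v \<noteq> zero_vec (Suc l)"
  shows "\<exists>f g w. zlin_iso (Suc l) f g \<and> min_first_coord (Suc l) (f ` L) w"
proof -
  have lv: "length v = Suc l" using int_lattice_length[OF L v(1)] .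
  obtain i where i: "i < Suc l" "v!i \<noteq> 0"
    using v(2) lv by (metis length_zero_vec nth_equalityI nth_zero_vec)
  define P where "P n \<longleftrightarrow> (\<exists>f g u. zlin_iso (Suc l) f g \<and> u \<in> L \<and> \<bar>f u ! 0\<bar> = int n \<and> n > 0)" for n
  have "P (nat \<bar>v!i\<bar>)"
    unfolding P_def using zlin_iso_swap0[OF i(1)] v(1) nth_swap0_0[of i v] lv i by fastforce
  then have "P (LEAST n. P n)" by (rule LeastI)
  then obtain f g u where fg: "zlin_iso (Suc l) f g" and u: "u \<in> L"
    and fu: "\<bar>f u ! 0\<bar> = int (LEAST n. P n)" and pos: "(LEAST n. P n) > 0"
    unfolding P_def by blast
  have "\<bar>f u ! 0\<bar> \<le> \<bar>h y ! 0\<bar>" if h: "zlin_iso (Suc l) h h'" "y \<in> f ` L" "h y ! 0 \<noteq> 0" for h h' y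
  proof -
    obtain u1 where u1: "u1 \<in> L" "y = f u1" using h(2) by auto
    have "P (nat \<bar>h y ! 0\<bar>)"
      unfolding P_def using zlin_iso_comp[OF fg h(1)] u1 h(3) by fastforce
    then show ?thesis using fu Least_le[of P] by fastforce
  qed
  then have "min_first_coord (Suc l) (f ` L) (f u)"
    unfolding min_first_coord_def using u fu pos by auto
  then show ?thesis using fg by blast
qed

lemma min_first_coord_dvd:
  assumes M: "int_lattice (Suc l) M" and w: "min_first_coord (Suc l) M w" and y: "y \<in> M"
  shows "w ! 0 dvd y ! 0"
proof (rule ccontr)
  assume nd: "\<not> w ! 0 dvd y ! 0"
  define y' where "y' = vec_add y (vec_smult (-(y!0 div w!0)) w)"
  have wM: "w \<in> M" and w0: "w ! 0 \<noteq> 0" using w by (auto simp: min_first_coord_def)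
  have "y' \<in> M" unfolding y'_def using int_lattice_add[OF M y int_lattice_smult[OF M wM]] .
  moreover have "y' ! 0 = y!0 mod w!0"
    unfolding y'_def using int_lattice_length[OF M y] int_lattice_length[OF M wM]
    by (simp add: minus_div_mult_eq_mod[symmetric] algebra_simps)
  moreover have "y!0 mod w!0 \<noteq> 0" using nd by (simp add: dvd_eq_mod_eq_0)
  ultimately have "\<bar>w!0\<bar> \<le> \<bar>y!0 mod w!0\<bar>"
    using w zlin_iso_id unfolding min_first_coord_def by (metis id_apply)
  moreover have "\<bar>y!0 mod w!0\<bar> < \<bar>w!0\<bar>" using w0 by (rule abs_mod_less)
  ultimately show False by simp
qed

text \<open>Reducing the other coordinates of w modulo \<open>w ! 0\<close> by a shear and moving a nonzero
  remainder to the front by a swap would contradict minimality.\<close>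
lemma min_first_coord_shear:
  assumes M: "int_lattice (Suc l) M" and w: "min_first_coord (Suc l) M w"
  shows "\<exists>c. length c = l \<and> shear c w = (w ! 0) # zero_vec l"
proof -
  have wM: "w \<in> M" and w0: "w ! 0 \<noteq> 0" using w by (auto simp: min_first_coord_def)
  have lw: "length w = Suc l" using int_lattice_length[OF M wM] .
  then have wsplit: "w = w!0 # tl w" by (cases w) auto
  define c where "c = map (\<lambda>t. -(t div w!0)) (tl w)"
  have lc: "length c = l" unfolding c_def using lw by simp
  have "vec_add (tl w) (vec_smult (w!0) c) = map (\<lambda>t. t mod w!0) (tl w)"
    unfolding c_def using lw
    by (intro nth_equalityI) (auto simp: minus_div_mult_eq_mod[symmetric] algebra_simps)
  then have Ew: "shear c w = w!0 # map (\<lambda>t. t mod w!0) (tl w)"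
    unfolding shear_def using wsplit by (metis list.sel(1))
  have "tl w ! j mod w!0 = 0" if j: "j < l" for j
  proof (rule ccontr)
    assume nz: "tl w ! j mod w!0 \<noteq> 0"
    have "(swap0 (Suc j) \<circ> shear c) w ! 0 = tl w ! j mod w!0"
      using nth_swap0_0[of "Suc j" "shear c w"] Ew lw j by simp
    moreover have "zlin_iso (Suc l) (swap0 (Suc j) \<circ> shear c) (shear (vec_neg c) \<circ> swap0 (Suc j))"
      using zlin_iso_comp[OF zlin_iso_shear[OF lc] zlin_iso_swap0[of "Suc j" "Suc l"]] j by simp
    ultimately have "\<bar>w!0\<bar> \<le> \<bar>tl w ! j mod w!0\<bar>"
      using w wM nz unfolding min_first_coord_def by metis
    moreover have "\<bar>tl w ! j mod w!0\<bar> < \<bar>w!0\<bar>" using w0 by (rule abs_mod_less)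
    ultimately show False by simp
  qed
  then have "map (\<lambda>t. t mod w!0) (tl w) = zero_vec l" using lw by (intro nth_equalityI) auto
  then show ?thesis using Ew lc by auto
qed

lemma int_lattice_split_first_coord:
  assumes M: "int_lattice (Suc l) M" and a: "a # zero_vec l \<in> M" and dvd: "\<forall>y\<in>M. a dvd hd y"
  shows "M = {y. length y = Suc l \<and> a dvd hd y \<and> 0 # tl y \<in> M}"
proof (intro equalityI subsetI)
  fix y assume yM: "y \<in> M"
  have ly: "length y = Suc l" using int_lattice_length[OF M yM] .
  have "vec_add y (vec_smult (-(hd y div a)) (a # zero_vec l)) = 0 # tl y"
    using ly dvd yM by (cases y) (auto intro!: nth_equalityI simp: vec_smult_def)
  moreover have "vec_add y (vec_smult (-(hd y div a)) (a # zero_vec l)) \<in> M"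
    using int_lattice_add[OF M yM int_lattice_smult[OF M a]] .
  ultimately show "y \<in> {y. length y = Suc l \<and> a dvd hd y \<and> 0 # tl y \<in> M}"
    using ly dvd yM by simp
next
  fix y assume "y \<in> {y. length y = Suc l \<and> a dvd hd y \<and> 0 # tl y \<in> M}"
  then have ly: "length y = Suc l" and dv: "a dvd hd y" and t: "0 # tl y \<in> M" by auto
  have "vec_add (0 # tl y) (vec_smult (hd y div a) (a # zero_vec l)) = y"
    using ly dv by (cases y) (auto intro!: nth_equalityI simp: vec_smult_def)
  moreover have "vec_add (0 # tl y) (vec_smult (hd y div a) (a # zero_vec l)) \<in> M"
    using int_lattice_add[OF M t int_lattice_smult[OF M a]] .
  ultimately show "y \<in> M" by simp
qed

lemma int_lattice_split_first:
  assumes L: "int_lattice (Suc l) L"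
  shows "\<exists>F G d0. zlin_iso (Suc l) F G \<and>
           F ` L = {y. length y = Suc l \<and> int d0 dvd hd y \<and> 0 # tl y \<in> F ` L}"
proof (cases "L \<subseteq> {zero_vec (Suc l)}")
  case True
  have "0 # zero_vec l \<in> L" using int_lattice_zero[OF L] zero_vec_Suc by simp
  moreover have "\<forall>y\<in>L. 0 dvd hd y" using True zero_vec_Suc by auto
  ultimately have "L = {y. length y = Suc l \<and> 0 dvd hd y \<and> 0 # tl y \<in> L}"
    by (rule int_lattice_split_first_coord[OF L])
  then have "id ` L = {y. length y = Suc l \<and> int 0 dvd hd y \<and> 0 # tl y \<in> id ` L}"
    by (simp only: image_id id_apply of_nat_0)
  then show ?thesis using zlin_iso_id by blast
next
  case False
  then obtain v where "v \<in> L" "v \<noteq> zero_vec (Suc l)" by auto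
  then obtain f g w where fg: "zlin_iso (Suc l) f g" and w: "min_first_coord (Suc l) (f ` L) w"
    using exists_min_first_coord[OF L] by blast
  have fL: "int_lattice (Suc l) (f ` L)" using int_lattice_image[OF L] fg
    by (simp add: zlin_iso_def)
  obtain c where lc: "length c = l" and cw: "shear c w = w ! 0 # zero_vec l"
    using min_first_coord_shear[OF fL w] by blast
  define F where "F = shear c \<circ> f"
  have FG: "zlin_iso (Suc l) F (g \<circ> shear (vec_neg c))"
    unfolding F_def using zlin_iso_comp[OF fg zlin_iso_shear[OF lc]] .
  have FL: "int_lattice (Suc l) (F ` L)" using int_lattice_image[OF L] FG
    by (simp add: zlin_iso_def)
  have "w ! 0 # zero_vec l \<in> F ` L"
    using w cw unfolding F_def min_first_coord_def by (metis image_comp image_eqI)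
  moreover have "w ! 0 dvd hd y" if yF: "y \<in> F ` L" for y
  proof -
    obtain y1 where y1: "y1 \<in> f ` L" "y = shear c y1" using yF unfolding F_def by auto
    then have "hd y = y1 ! 0" using int_lattice_length[OF fL y1(1)] by (cases y1) auto
    then show ?thesis using min_first_coord_dvd[OF fL w y1(1)] by simp
  qed
  ultimately have "F ` L = {y. length y = Suc l \<and> w ! 0 dvd hd y \<and> 0 # tl y \<in> F ` L}"
    using int_lattice_split_first_coord[OF FL] by blast
  then have "F ` L = {y. length y = Suc l \<and> int (nat \<bar>w ! 0\<bar>) dvd hd y \<and> 0 # tl y \<in> F ` L}"
    by simp
  then show ?thesis using FG by blast
qed

theorem int_lattice_diagonalization:
  assumes "int_lattice l L"
  shows "\<exists>f g d. zlin_iso l f g \<and> length d = l \<and> f ` L = diag_lattice l d"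
  using assms
proof (induction l arbitrary: L)
  case 0
  have "L = {[]}" using int_lattice_length[OF 0] int_lattice_zero[OF 0] by (auto simp: zero_vec_def)
  moreover have "diag_lattice 0 [] = {[]}" by (auto simp: diag_lattice_def)
  ultimately show ?case
    using zlin_iso_id[of 0] by (intro exI[of _ id] exI[of _ "[] :: nat list"]) (simp add: id_def)
next
  case (Suc l)
  obtain F G d0 where FG: "zlin_iso (Suc l) F G"
    and split: "F ` L = {y. length y = Suc l \<and> int d0 dvd hd y \<and> 0 # tl y \<in> F ` L}"
    using int_lattice_split_first[OF Suc.prems] by blast
  define L' where "L' = {xs. 0 # xs \<in> F ` L}"
  have L': "int_lattice l L'"
    unfolding L'_def using int_lattice_Cons_zero int_lattice_image[OF Suc.prems] FG
      by (simp add: zlin_iso_def)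
  obtain f' g' d' where fg': "zlin_iso l f' g'" and ld': "length d' = l"
    and e': "f' ` L' = diag_lattice l d'"
    using Suc.IH[OF L'] by blast
  have "(lift f' \<circ> F) ` L = diag_lattice (Suc l) (d0 # d')"
  proof (intro equalityI subsetI)
    fix z assume "z \<in> (lift f' \<circ> F) ` L"
    then obtain y where y: "y \<in> F ` L" "z = lift f' y" by auto
    then have "length y = Suc l" "int d0 dvd hd y" "tl y \<in> L'" using split unfolding L'_def by auto
    moreover have "f' (tl y) \<in> diag_lattice l d'" using e' \<open>tl y \<in> L'\<close> by blast
    ultimately show "z \<in> diag_lattice (Suc l) (d0 # d')"
      using y(2) by (auto simp: diag_lattice_def lift_def less_Suc_eq_0_disj)
  next
    fix z assume z: "z \<in> diag_lattice (Suc l) (d0 # d')"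
    then obtain a zs where zz: "z = a # zs" "length zs = l"
      unfolding diag_lattice_def by (auto simp: length_Suc_conv)
    have "int d0 dvd a" "zs \<in> diag_lattice l d'" using z zz by (auto simp: diag_lattice_def)
    then obtain xs where xs: "xs \<in> L'" "zs = f' xs" using e' by auto
    then have "a # xs \<in> F ` L"
      using split int_lattice_length[OF L' xs(1)] \<open>int d0 dvd a\<close> unfolding L'_def by auto
    moreover have "lift f' (a # xs) = z" using zz xs by (simp add: lift_def)
    ultimately show "z \<in> (lift f' \<circ> F) ` L" by (metis image_comp image_eqI)
  qed
  then show ?case using zlin_iso_comp[OF FG zlin_iso_lift[OF fg']] ld' by (metis length_Cons)
qed

section \<open>Counting solutions modulo q\<close>

definition dot :: "nat \<Rightarrow> int list \<Rightarrow> int list \<Rightarrow> int" where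
  "dot l a x = (\<Sum>i<l. a!i * x!i)"

definition annihilator_mod :: "nat \<Rightarrow> nat \<Rightarrow> int list set \<Rightarrow> int list set" where
  "annihilator_mod l q L =
     {x. length x = l \<and> set x \<subseteq> {0..<int q} \<and> (\<forall>a\<in>L. dot l a x mod int q = 0)}"

definition transpose_mod :: "nat \<Rightarrow> nat \<Rightarrow> (int list \<Rightarrow> int list) \<Rightarrow> int list \<Rightarrow> int list" where
  "transpose_mod l q f x = map (\<lambda>j. dot l (f (unit_vec l j)) x mod int q) [0..<l]"

lemma length_transpose_mod[simp]: "length (transpose_mod l q f x) = l"
  by (simp add: transpose_mod_def)

lemma dot_unit_vec: "j < l \<Longrightarrow> dot l (unit_vec l j) x = x ! j"
proof -
  assume "j < l"
  have "dot l (unit_vec l j) x = (\<Sum>i<l. if i = j then x!i else 0)"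
    unfolding dot_def by (rule sum.cong) auto
  then show ?thesis using \<open>j < l\<close> by simp
qed

lemma dot_transpose_mod:
  assumes f: "zlinear l f" and b: "length b = l" and x: "length x = l"
  shows "dot l b (transpose_mod l q f x) mod int q = dot l (f b) x mod int q"
proof -
  have "dot l b (transpose_mod l q f x) mod int q =
      (\<Sum>j<l. b!j * (dot l (f (unit_vec l j)) x mod int q)) mod int q"
    unfolding dot_def transpose_mod_def by simp
  also have "\<dots> = (\<Sum>j<l. (b!j * (dot l (f (unit_vec l j)) x mod int q)) mod int q) mod int q"
    by (simp add: mod_sum_eq)
  also have "\<dots> = (\<Sum>j<l. (b!j * dot l (f (unit_vec l j)) x) mod int q) mod int q"
    by (simp add: mod_mult_right_eq)
  also have "\<dots> = (\<Sum>j<l. b!j * dot l (f (unit_vec l j)) x) mod int q"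
    by (simp add: mod_sum_eq)
  also have "(\<Sum>j<l. b!j * dot l (f (unit_vec l j)) x) =
      (\<Sum>j<l. \<Sum>i<l. b!j * f (unit_vec l j) ! i * x!i)"
    unfolding dot_def by (simp add: sum_distrib_left mult.assoc)
  also have "\<dots> = (\<Sum>i<l. \<Sum>j<l. b!j * f (unit_vec l j) ! i * x!i)" by (rule sum.swap)
  also have "\<dots> = (\<Sum>i<l. f b ! i * x!i)"
    by (rule sum.cong) (auto simp: zlinear_nth[OF f b] sum_distrib_right)
  finally show ?thesis unfolding dot_def .
qed

lemma transpose_mod_inverse:
  assumes fg: "zlin_iso l f g" and x: "length x = l" "set x \<subseteq> {0..<int q}"
  shows "transpose_mod l q g (transpose_mod l q f x) = x"
proof (rule nth_equalityI)
  fix j assume "j < length (transpose_mod l q g (transpose_mod l q f x))"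
  then have j: "j < l" by simp
  have lg: "zlinear l g" and lf: "zlinear l f" using fg by (auto simp: zlin_iso_def)
  have "transpose_mod l q g (transpose_mod l q f x) ! j =
      dot l (g (unit_vec l j)) (transpose_mod l q f x) mod int q"
    using j by (simp add: transpose_mod_def)
  also have "\<dots> = dot l (f (g (unit_vec l j))) x mod int q"
    using dot_transpose_mod[OF lf _ x(1)] zlinear_length[OF lg] by simp
  also have "\<dots> = x!j mod int q" using fg j by (simp add: zlin_iso_def dot_unit_vec)
  also have "\<dots> = x!j" using x j by (auto simp: subset_iff)
  finally show "transpose_mod l q g (transpose_mod l q f x) ! j = x!j" .
qed (simp add: x)

lemma set_transpose_mod: "q > 0 \<Longrightarrow> set (transpose_mod l q f x) \<subseteq> {0..<int q}"
  by (auto simp: transpose_mod_def)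

lemma transpose_mod_annihilator:
  assumes fg: "zlin_iso l f g" and L: "\<forall>b\<in>L. length b = l" and q: "q > 0"
    and x: "x \<in> annihilator_mod l q (f ` L)"
  shows "transpose_mod l q f x \<in> annihilator_mod l q L"
proof -
  have lf: "zlinear l f" using fg by (simp add: zlin_iso_def)
  have "dot l b (transpose_mod l q f x) mod int q = 0" if b: "b \<in> L" for b
    using dot_transpose_mod[OF lf L[rule_format, OF b], of x q] x b
      by (auto simp: annihilator_mod_def)
  then show ?thesis using set_transpose_mod[OF q] by (auto simp: annihilator_mod_def)
qed

lemma card_annihilator_mod_image:
  assumes fg: "zlin_iso l f g" and L: "\<forall>b\<in>L. length b = l" and q: "q > 0"
  shows "card (annihilator_mod l q (f ` L)) = card (annihilator_mod l q L)"
proof -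
  have gf: "zlin_iso l g f" using zlin_iso_sym[OF fg] .
  have gfL: "g ` f ` L = L" using fg L by (force simp: zlin_iso_def image_iff)
  have fL: "\<forall>b\<in>f ` L. length b = l" using fg L by (auto simp: zlin_iso_def zlinear_length)
  have "bij_betw (transpose_mod l q f) (annihilator_mod l q (f ` L)) (annihilator_mod l q L)"
  proof (rule bij_betw_byWitness[where f' = "transpose_mod l q g"])
    show "\<forall>x\<in>annihilator_mod l q (f ` L). transpose_mod l q g (transpose_mod l q f x) = x"
      using transpose_mod_inverse[OF fg] by (auto simp: annihilator_mod_def)
    show "\<forall>x\<in>annihilator_mod l q L. transpose_mod l q f (transpose_mod l q g x) = x"
      using transpose_mod_inverse[OF gf] by (auto simp: annihilator_mod_def)
    show "transpose_mod l q f ` annihilator_mod l q (f ` L) \<subseteq> annihilator_mod l q L"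
      using transpose_mod_annihilator[OF fg L q] by auto
    show "transpose_mod l q g ` annihilator_mod l q L \<subseteq> annihilator_mod l q (f ` L)"
      using transpose_mod_annihilator[OF gf fL q] gfL by auto
  qed
  then show ?thesis by (rule bij_betw_same_card)
qed

lemma card_lists_nth_in:
  assumes "\<And>i. finite (P i)"
  shows "card {x. length x = n \<and> (\<forall>i<n. x!i \<in> P i)} = (\<Prod>i<n. card (P i))"
  using assms
proof (induction n arbitrary: P)
  case 0
  have "{x. length x = 0 \<and> (\<forall>i<0. x!i \<in> P i)} = {[]}" by auto
  then show ?case by simp
next
  case (Suc n)
  have eq: "{x. length x = Suc n \<and> (\<forall>i<Suc n. x!i \<in> P i)} =
        (\<lambda>(a, xs). a # xs) ` (P 0 \<times> {x. length x = n \<and> (\<forall>i<n. x!i \<in> P (Suc i))})"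
  proof (intro equalityI subsetI)
    fix x assume "x \<in> {x. length x = Suc n \<and> (\<forall>i<Suc n. x!i \<in> P i)}"
    then obtain a xs where "x = a # xs" "length xs = n" "\<forall>i<Suc n. x!i \<in> P i"
      by (auto simp: length_Suc_conv)
    then show "x \<in> (\<lambda>(a, xs). a # xs) ` (P 0 \<times> {x. length x = n \<and> (\<forall>i<n. x!i \<in> P (Suc i))})"
      by (force simp: image_iff)
  next
    fix x assume "x \<in> (\<lambda>(a, xs). a # xs) ` (P 0 \<times> {x. length x = n \<and> (\<forall>i<n. x!i \<in> P (Suc i))})"
    then show "x \<in> {x. length x = Suc n \<and> (\<forall>i<Suc n. x!i \<in> P i)}"
      by (auto simp: less_Suc_eq_0_disj)
  qed
  have inj: "inj_on (\<lambda>(a, xs). a # xs) X" for X :: "('a \<times> 'a list) set" by (auto simp: inj_on_def)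
  have "card {x. length x = Suc n \<and> (\<forall>i<Suc n. x!i \<in> P i)} =
      card (P 0) * card {x. length x = n \<and> (\<forall>i<n. x!i \<in> P (Suc i))}"
    unfolding eq by (simp add: card_image[OF inj] card_cartesian_product)
  also have "\<dots> = card (P 0) * (\<Prod>i<n. card (P (Suc i)))" using Suc.IH[of "\<lambda>i. P (Suc i)"] Suc.prems
    by simp
  also have "\<dots> = (\<Prod>i<Suc n. card (P i))" by (simp only: prod.lessThan_Suc_shift)
  finally show ?case .
qed

definition mult_kernel_mod :: "nat \<Rightarrow> nat \<Rightarrow> int set" where
  "mult_kernel_mod d q = {a. 0 \<le> a \<and> a < int q \<and> (int d * a) mod int q = 0}"

lemma mult_mod_eq_0_iff_dvd:
  fixes d q a :: int
  assumes q: "q > 0"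
  shows "(d * a) mod q = 0 \<longleftrightarrow> q div gcd d q dvd a"
proof -
  define g where "g = gcd d q"
  define q' where "q' = q div g"
  define d' where "d' = d div g"
  have g: "g > 0" using q by (simp add: g_def)
  have qq: "q = g * q'" unfolding q'_def g_def by simp
  have dd: "d = g * d'" unfolding d'_def g_def by simp
  have cop: "coprime q' d'"
    unfolding q'_def d'_def g_def using q div_gcd_coprime[of q d] by (simp add: coprime_commute gcd.commute)
  have "(d * a) mod q = 0 \<longleftrightarrow> g * q' dvd g * (d' * a)"
    using qq dd by (simp add: dvd_eq_mod_eq_0 mult.assoc)
  also have "\<dots> \<longleftrightarrow> q' dvd d' * a" using g by simp
  also have "\<dots> \<longleftrightarrow> q' dvd a" using cop by (simp add: coprime_dvd_mult_right_iff)
  finally show ?thesis unfolding q'_def g_def .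
qed

lemma card_mult_kernel_mod:
  assumes q: "q > 0"
  shows "card (mult_kernel_mod d q) = gcd d q"
proof -
  define g where "g = gcd (int d) (int q)"
  define r where "r = int q div g"
  have g: "g > 0" using q by (simp add: g_def)
  have q_eq: "int q = g * r" unfolding r_def g_def by simp
  have "g * r > 0" using q q_eq by simp
  then have r: "r > 0" using g by (simp add: zero_less_mult_iff)
  have mem: "a \<in> mult_kernel_mod d q \<longleftrightarrow> 0 \<le> a \<and> a < g * r \<and> r dvd a" for a
  proof -
    have "(int d * a) mod int q = 0 \<longleftrightarrow> r dvd a"
      unfolding r_def g_def by (rule mult_mod_eq_0_iff_dvd) (use q in simp)
    then show ?thesis unfolding mult_kernel_mod_def q_eq[symmetric] by simp
  qed
  have "mult_kernel_mod d q = (\<lambda>t. r * t) ` {0..<g}"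
  proof (intro equalityI subsetI)
    fix a assume "a \<in> mult_kernel_mod d q"
    then have a: "0 \<le> a" "a < g * r" "r dvd a" using mem[of a] by simp_all
    then obtain t where t: "a = r * t" by blast
    have "0 \<le> t" using a(1) r t by (simp add: zero_le_mult_iff)
    moreover have "t < g" using a(2) r t by (metis mult.commute mult_less_cancel_left_pos)
    ultimately show "a \<in> (\<lambda>t. r * t) ` {0..<g}" using t by auto
  next
    fix a assume "a \<in> (\<lambda>t. r * t) ` {0..<g}"
    then obtain t where t: "a = r * t" "0 \<le> t" "t < g" unfolding image_iff by (auto intro: that)
    have "r * t < g * r" using t r by (metis mult.commute mult_strict_left_mono)
    then show "a \<in> mult_kernel_mod d q" using mem[of a] r t by simp
  qed
  moreover have "inj_on (\<lambda>t. r * t) {0..<g}" using r by (auto simp: inj_on_def)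
  ultimately show ?thesis by (simp add: card_image g_def)
qed

lemma dot_smult_unit_vec: "i < l \<Longrightarrow> dot l (vec_smult c (unit_vec l i)) x = c * x ! i"
  using dot_unit_vec[of i l x] unfolding dot_def by (simp add: mult.assoc flip: sum_distrib_left)

lemma annihilator_mod_diag_lattice:
  "annihilator_mod l q (diag_lattice l d) =
     {x. length x = l \<and> (\<forall>i<l. x!i \<in> mult_kernel_mod (d!i) q)}"
proof (intro equalityI subsetI)
  fix x assume x: "x \<in> annihilator_mod l q (diag_lattice l d)"
  have "x!i \<in> mult_kernel_mod (d!i) q" if i: "i < l" for i
  proof -
    have "vec_smult (int (d!i)) (unit_vec l i) \<in> diag_lattice l d" using i
      by (auto simp: diag_lattice_def)
    then have "(int (d!i) * x!i) mod int q = 0"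
      using x dot_smult_unit_vec[OF i] by (auto simp: annihilator_mod_def)
    moreover have "x!i \<in> set x" using x i by (auto simp: annihilator_mod_def)
    ultimately show ?thesis using x by (auto simp: annihilator_mod_def mult_kernel_mod_def)
  qed
  then show "x \<in> {x. length x = l \<and> (\<forall>i<l. x!i \<in> mult_kernel_mod (d!i) q)}"
    using x by (auto simp: annihilator_mod_def)
next
  fix x assume x: "x \<in> {x. length x = l \<and> (\<forall>i<l. x!i \<in> mult_kernel_mod (d!i) q)}"
  have "set x \<subseteq> {0..<int q}" using x by (auto simp: in_set_conv_nth mult_kernel_mod_def)
  moreover have "dot l a x mod int q = 0" if a: "a \<in> diag_lattice l d" for a
  proof -
    have "(a!i * x!i) mod int q = 0" if i: "i < l" for i
    proof -
      obtain t where t: "a!i = int (d!i) * t" using a i by (auto simp: diag_lattice_def)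
      have "(a!i * x!i) mod int q = (t * ((int (d!i) * x!i) mod int q)) mod int q"
        by (simp add: t mod_mult_right_eq algebra_simps)
      then show ?thesis using x i by (simp add: mult_kernel_mod_def)
    qed
    then have "(\<Sum>i<l. (a!i * x!i) mod int q) mod int q = 0" by simp
    then show ?thesis unfolding dot_def by (simp add: mod_sum_eq)
  qed
  ultimately show "x \<in> annihilator_mod l q (diag_lattice l d)" using x
    by (auto simp: annihilator_mod_def)
qed

lemma card_annihilator_mod_diag_lattice:
  assumes q: "q > 0"
  shows "card (annihilator_mod l q (diag_lattice l d)) = (\<Prod>i<l. gcd (d!i) q)"
proof -
  have "finite (mult_kernel_mod (d!i) q)" for i
    by (rule finite_subset[of _ "{0..<int q}"]) (auto simp: mult_kernel_mod_def)
  then show ?thesis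
    unfolding annihilator_mod_diag_lattice
      by (simp add: card_lists_nth_in card_mult_kernel_mod[OF q])
qed

section \<open>The rank of a diagonalized lattice\<close>

text \<open>Indexed families rather than sets: elimination can make two vectors coincide.\<close>
definition indep_family :: "nat \<Rightarrow> 'k set \<Rightarrow> ('k \<Rightarrow> int list) \<Rightarrow> bool" where
  "indep_family l K u \<longleftrightarrow>
     (\<forall>c. (\<forall>i<l. (\<Sum>\<kappa>\<in>K. c \<kappa> * u \<kappa> ! i) = 0) \<longrightarrow> (\<forall>\<kappa>\<in>K. c \<kappa> = 0))"

definition supported_on :: "nat \<Rightarrow> nat set \<Rightarrow> int list \<Rightarrow> bool" where
  "supported_on l J v \<longleftrightarrow> length v = l \<and> (\<forall>i<l. i \<notin> J \<longrightarrow> v ! i = 0)"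

lemma indep_family_eliminate:
  assumes K: "finite K" and k0: "k0 \<in> K" and pivot: "u k0 ! j \<noteq> 0"
    and len: "\<forall>\<kappa>\<in>K. length (u \<kappa>) = l" and ind: "indep_family l K u"
  shows "indep_family l (K - {k0})
           (\<lambda>\<kappa>. vec_add (vec_smult (u k0 ! j) (u \<kappa>)) (vec_smult (- (u \<kappa> ! j)) (u k0)))"
    (is "indep_family l ?K' ?u'")
  unfolding indep_family_def
proof (intro allI impI ballI)
  fix c' :: "'a \<Rightarrow> int" and \<kappa>
  assume rel: "\<forall>i<l. (\<Sum>\<kappa>\<in>?K'. c' \<kappa> * ?u' \<kappa> ! i) = 0" and k: "\<kappa> \<in> ?K'"
  define v where "v = u k0"
  define c where "c \<kappa> = (if \<kappa> = k0 then - (\<Sum>\<kappa>'\<in>?K'. c' \<kappa>' * u \<kappa>' ! j) else c' \<kappa> * v!j)" for \<kappa>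
  have "(\<Sum>\<kappa>\<in>K. c \<kappa> * u \<kappa> ! i) = 0" if i: "i < l" for i
  proof -
    have "(\<Sum>\<kappa>\<in>K. c \<kappa> * u \<kappa> ! i) = c k0 * v ! i + (\<Sum>\<kappa>\<in>?K'. c \<kappa> * u \<kappa> ! i)"
      using k0 K by (simp add: sum.remove v_def)
    also have "(\<Sum>\<kappa>\<in>?K'. c \<kappa> * u \<kappa> ! i) = (\<Sum>\<kappa>\<in>?K'. c' \<kappa> * v!j * u \<kappa> ! i)"
      by (rule sum.cong) (auto simp: c_def)
    also have "c k0 * v ! i = - (\<Sum>\<kappa>\<in>?K'. c' \<kappa> * u \<kappa> ! j * v!i)"
      by (simp add: c_def sum_distrib_right)
    also have "- (\<Sum>\<kappa>\<in>?K'. c' \<kappa> * u \<kappa> ! j * v!i) + (\<Sum>\<kappa>\<in>?K'. c' \<kappa> * v!j * u \<kappa> ! i) =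
        (\<Sum>\<kappa>\<in>?K'. c' \<kappa> * v!j * u \<kappa> ! i - c' \<kappa> * u \<kappa> ! j * v!i)"
      by (simp add: sum_subtractf)
    also have "\<dots> = (\<Sum>\<kappa>\<in>?K'. c' \<kappa> * ?u' \<kappa> ! i)"
      using len k0(1) i by (intro sum.cong) (auto simp: v_def algebra_simps)
    finally show ?thesis using rel i by simp
  qed
  then have "\<forall>\<kappa>\<in>K. c \<kappa> = 0" using ind unfolding indep_family_def by blast
  then have "c' \<kappa> * v!j = 0" using k by (auto simp: c_def)
  then show "c' \<kappa> = 0" using pivot by (simp add: v_def)
qed

lemma card_indep_family_le:
  assumes "finite J"
  shows "finite K \<Longrightarrow> \<forall>\<kappa>\<in>K. supported_on l J (u \<kappa>) \<Longrightarrow> indep_family l K u \<Longrightarrow> card K \<le> card J"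
  using assms
proof (induction J arbitrary: K u rule: finite_induct)
  case empty
  have "(\<forall>i<l. (\<Sum>\<kappa>\<in>K. (\<lambda>_. 1) \<kappa> * u \<kappa> ! i) = 0) \<longrightarrow> (\<forall>\<kappa>\<in>K. (\<lambda>_. 1::int) \<kappa> = 0)"
    using empty.prems(3) unfolding indep_family_def by (rule spec)
  moreover have "\<forall>i<l. (\<Sum>\<kappa>\<in>K. (\<lambda>_. 1) \<kappa> * u \<kappa> ! i) = 0"
    using empty.prems(2) by (intro allI impI sum.neutral) (simp add: supported_on_def)
  ultimately show ?case by auto
next
  case (insert j J)
  show ?case
  proof (cases "\<forall>\<kappa>\<in>K. u \<kappa> ! j = 0")
    case True
    then have "\<forall>\<kappa>\<in>K. supported_on l J (u \<kappa>)"
      using insert.prems(2) unfolding supported_on_def by (metis insert_iff)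
    then show ?thesis using insert.IH[OF insert.prems(1) _ insert.prems(3)] insert.hyps by simp
  next
    case False
    then obtain k0 where k0: "k0 \<in> K" "u k0 ! j \<noteq> 0" by blast
    define u' where "u' \<kappa> = vec_add (vec_smult (u k0 ! j) (u \<kappa>)) (vec_smult (- (u \<kappa> ! j)) (u k0))"
      for \<kappa>
    have len: "\<forall>\<kappa>\<in>K. length (u \<kappa>) = l" using insert.prems(2) by (simp add: supported_on_def)
    have "supported_on l J (u' \<kappa>)" if \<kappa>: "\<kappa> \<in> K" for \<kappa>
    proof -
      have "u' \<kappa> ! i = u k0 ! j * u \<kappa> ! i - u \<kappa> ! j * u k0 ! i" if "i < l" for i
        using len \<kappa> k0(1) that by (simp add: u'_def)
      moreover have "u \<kappa> ! i = 0 \<and> u k0 ! i = 0" if "i < l" "i \<notin> insert j J" for i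
        using insert.prems(2) \<kappa> k0(1) that unfolding supported_on_def by blast
      ultimately show ?thesis using len \<kappa> k0(1) unfolding supported_on_def u'_def
        by (metis diff_self insert_iff length_vec_add length_vec_smult min.idem mult.commute mult_zero_right)
    qed
    moreover have "indep_family l (K - {k0}) u'"
      unfolding u'_def using indep_family_eliminate[OF insert.prems(1) k0 len insert.prems(3)] .
    ultimately have "card (K - {k0}) \<le> card J" using insert.IH insert.prems(1) by blast
    then show ?thesis using insert.hyps insert.prems(1) k0(1) by (simp add: card_Diff_singleton)
  qed
qed

lemma card_lin_indep_le_support:
  assumes "lin_indep_Z l X" "finite J" "\<forall>x\<in>X. supported_on l J x"
  shows "card X \<le> card J"
  using card_indep_family_le[OF assms(2), where K = X and u = id and l = l] assms
  by (simp add: lin_indep_Z_def indep_family_def)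

definition lin_comb :: "nat \<Rightarrow> (int list \<Rightarrow> int) \<Rightarrow> int list set \<Rightarrow> int list" where
  "lin_comb l c X = map (\<lambda>i. \<Sum>x\<in>X. c x * x!i) [0..<l]"

lemma length_lin_comb[simp]: "length (lin_comb l c X) = l" by (simp add: lin_comb_def)

lemma zlinear_lin_comb:
  assumes f: "zlinear l f" and X: "\<forall>x\<in>X. length x = l" and i: "i < l"
  shows "f (lin_comb l c X) ! i = (\<Sum>x\<in>X. c x * f x ! i)"
proof -
  have "f (lin_comb l c X) ! i = (\<Sum>j<l. (\<Sum>x\<in>X. c x * x!j) * f (unit_vec l j) ! i)"
    using zlinear_nth[OF f _ i, of "lin_comb l c X"] by (simp add: lin_comb_def)
  also have "\<dots> = (\<Sum>x\<in>X. \<Sum>j<l. c x * x!j * f (unit_vec l j) ! i)"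
    by (simp add: sum_distrib_right sum.swap[of _ X])
  also have "\<dots> = (\<Sum>x\<in>X. c x * f x ! i)"
    by (rule sum.cong) (auto simp: zlinear_nth[OF f _ i] X sum_distrib_left mult.assoc)
  finally show ?thesis .
qed

lemma lin_indep_Z_image:
  assumes fg: "zlin_iso l f g" and X: "\<forall>x\<in>X. length x = l" and ind: "lin_indep_Z l X"
  shows "lin_indep_Z l (f ` X) \<and> card (f ` X) = card X"
proof -
  have lf: "zlinear l f" and lg: "zlinear l g" and gf: "\<And>x. length x = l \<Longrightarrow> g (f x) = x"
    using fg by (auto simp: zlin_iso_def)
  have inj: "inj_on f X" using gf X by (metis inj_on_inverseI)
  have fin: "finite X" using ind by (simp add: lin_indep_Z_def)
  have "\<forall>y\<in>f ` X. c y = 0" if rel: "\<forall>i<l. (\<Sum>y\<in>f ` X. c y * y ! i) = 0" for c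
  proof -
    have r2: "\<forall>i<l. (\<Sum>x\<in>X. c (f x) * f x ! i) = 0" using rel by (simp add: sum.reindex[OF inj])
    have "f (lin_comb l (c \<circ> f) X) = zero_vec l"
      using zlinear_lin_comb[OF lf X] r2 zlinear_length[OF lf, of "lin_comb l (c \<circ> f) X"]
      by (intro nth_equalityI) (auto simp: lin_comb_def)
    then have "g (f (lin_comb l (c \<circ> f) X)) = g (zero_vec l)" by simp
    then have lz: "lin_comb l (c \<circ> f) X = zero_vec l"
      using gf[of "lin_comb l (c \<circ> f) X"] zlinear_zero[OF lg] by (simp only: length_lin_comb)
    have "\<forall>i<l. (\<Sum>x\<in>X. (c \<circ> f) x * x ! i) = 0"
    proof (intro allI impI)
      fix i assume "i < l"
      then show "(\<Sum>x\<in>X. (c \<circ> f) x * x ! i) = 0"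
        using arg_cong[OF lz, of "\<lambda>v. v ! i"] by (simp add: lin_comb_def)
    qed
    then have "\<forall>x\<in>X. (c \<circ> f) x = 0" using ind unfolding lin_indep_Z_def by blast
    then show ?thesis by auto
  qed
  then show ?thesis using fin card_image[OF inj] by (simp add: lin_indep_Z_def)
qed

definition zrank :: "nat \<Rightarrow> int list set \<Rightarrow> nat" where
  "zrank l L = Max {card X | X. X \<subseteq> L \<and> lin_indep_Z l X}"

lemma card_lin_indep_le_diag:
  assumes fg: "zlin_iso l f g" and L: "int_lattice l L" and e: "f ` L = diag_lattice l d"
    and X: "X \<subseteq> L" "lin_indep_Z l X"
  shows "card X \<le> card {i. i < l \<and> d!i \<noteq> 0}"
proof -
  have XL: "\<forall>x\<in>X. length x = l" using X(1) int_lattice_length[OF L] by blast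
  have "\<forall>y\<in>f ` X. supported_on l {i. i < l \<and> d!i \<noteq> 0} y"
    using e X(1) by (fastforce simp: diag_lattice_def supported_on_def)
  then show ?thesis
    using lin_indep_Z_image[OF fg XL X(2)] card_lin_indep_le_support[of l "f ` X"] by simp
qed

lemma lin_indep_Z_diag_basis:
  fixes l :: nat and d :: "nat list"
  defines "J \<equiv> {i. i < l \<and> d!i \<noteq> 0}"
  shows "lin_indep_Z l ((\<lambda>i. vec_smult (int (d!i)) (unit_vec l i)) ` J)"
    and "card ((\<lambda>i. vec_smult (int (d!i)) (unit_vec l i)) ` J) = card J"
proof -
  define b where "b i = vec_smult (int (d!i)) (unit_vec l i)" for i
  have finJ: "finite J" by (simp add: J_def)
  have inj: "inj_on b J"
  proof (rule inj_onI)
    fix i j assume ij: "i \<in> J" "j \<in> J" "b i = b j"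
    then have "b i ! i = b j ! i" by simp
    then show "i = j" using ij(1,2) by (auto simp: J_def b_def split: if_splits)
  qed
  then show "card (b ` J) = card J" by (rule card_image)
  show "lin_indep_Z l (b ` J)"
    unfolding lin_indep_Z_def
  proof (intro conjI allI impI ballI)
    show "finite (b ` J)" using finJ by simp
    fix c assume rel: "\<forall>i<l. (\<Sum>x\<in>b ` J. c x * x ! i) = 0"
    fix v assume "v \<in> b ` J"
    then obtain i where i: "i \<in> J" "v = b i" by auto
    have il: "i < l" using i by (simp add: J_def)
    have "(\<Sum>x\<in>b ` J. c x * x ! i) = (\<Sum>j\<in>J. c (b j) * b j ! i)"
      by (simp add: sum.reindex[OF inj])
    also have "\<dots> = (\<Sum>j\<in>J. if j = i then c v * int (d!i) else 0)"
      by (rule sum.cong) (auto simp: il i(2) b_def)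
    also have "\<dots> = c v * int (d!i)" using i(1) finJ by simp
    finally have "c v * int (d!i) = 0" using rel il by simp
    then show "c v = 0" using i(1) by (simp add: J_def)
  qed
qed

lemma zrank_diagonalized:
  assumes fg: "zlin_iso l f g" and L: "int_lattice l L" and e: "f ` L = diag_lattice l d"
  shows "zrank l L = card {i. i < l \<and> d!i \<noteq> 0}"
proof -
  define J where "J = {i. i < l \<and> d!i \<noteq> 0}"
  define B where "B = (\<lambda>i. vec_smult (int (d!i)) (unit_vec l i)) ` J"
  define ranks where "ranks = {card X | X. X \<subseteq> L \<and> lin_indep_Z l X}"
  have gB: "g ` B \<subseteq> L"
  proof
    fix y assume "y \<in> g ` B"
    then obtain b where "b \<in> B" "y = g b" by auto
    moreover have "B \<subseteq> f ` L" unfolding B_def J_def e diag_lattice_def by auto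
    ultimately show "y \<in> L" using fg int_lattice_length[OF L] by (auto simp: zlin_iso_def)
  qed
  have "\<forall>x\<in>B. length x = l" by (auto simp: B_def)
  then have indep: "lin_indep_Z l (g ` B)" "card (g ` B) = card J"
    using lin_indep_Z_image[OF zlin_iso_sym[OF fg]] lin_indep_Z_diag_basis[where l = l and d = d]
    unfolding B_def J_def by auto
  have mem: "card J \<in> ranks" unfolding ranks_def using gB indep by (auto intro!: exI[of _ "g ` B"])
  have le: "n \<le> card J" if "n \<in> ranks" for n
    using that card_lin_indep_le_diag[OF fg L e] unfolding ranks_def J_def by blast
  then have "ranks \<subseteq> {..card J}" by auto
  then have "finite ranks" by (rule finite_subset) simp
  then have "Max ranks = card J" using le mem by (rule Max_eqI)
  then show ?thesis unfolding zrank_def ranks_def J_def .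
qed

section \<open>Group-theoretic interpretation\<close>

lemma carrier_Zl[simp]: "carrier (Zl l) = {x. length x = l}" by (simp add: Zl_def)
lemma mult_Zl[simp]: "x \<otimes>\<^bsub>Zl l\<^esub> y = vec_add x y" by (simp add: Zl_def vec_add_def)
lemma one_Zl[simp]: "\<one>\<^bsub>Zl l\<^esub> = zero_vec l" by (simp add: Zl_def zero_vec_def)

lemma comm_group_Zl: "comm_group (Zl l)"
proof (rule comm_groupI)
  fix x y z :: "int list"
  assume x: "x \<in> carrier (Zl l)" and y: "y \<in> carrier (Zl l)" and z: "z \<in> carrier (Zl l)"
  show "x \<otimes>\<^bsub>Zl l\<^esub> y \<in> carrier (Zl l)" using x y by simp
  show "x \<otimes>\<^bsub>Zl l\<^esub> y \<otimes>\<^bsub>Zl l\<^esub> z = x \<otimes>\<^bsub>Zl l\<^esub> (y \<otimes>\<^bsub>Zl l\<^esub> z)"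
    using x y z by (simp, intro nth_equalityI) auto
next
  fix x y :: "int list"
  assume x: "x \<in> carrier (Zl l)" and y: "y \<in> carrier (Zl l)"
  show "x \<otimes>\<^bsub>Zl l\<^esub> y = y \<otimes>\<^bsub>Zl l\<^esub> x" using x y by (simp, intro nth_equalityI) auto
next
  show "\<one>\<^bsub>Zl l\<^esub> \<in> carrier (Zl l)" by simp
next
  fix x :: "int list" assume x: "x \<in> carrier (Zl l)"
  show "\<one>\<^bsub>Zl l\<^esub> \<otimes>\<^bsub>Zl l\<^esub> x = x" using x by (simp, intro nth_equalityI) auto
  show "\<exists>y\<in>carrier (Zl l). y \<otimes>\<^bsub>Zl l\<^esub> x = \<one>\<^bsub>Zl l\<^esub>"
    using x by (intro bexI[of _ "vec_neg x"]) (simp, intro nth_equalityI, auto)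
qed

lemma group_Zl: "group (Zl l)" using comm_group_Zl comm_group_def by blast

lemma inv_Zl: "length x = l \<Longrightarrow> inv\<^bsub>Zl l\<^esub> x = vec_neg x"
  by (rule group.inv_equality[OF group_Zl]) (simp, intro nth_equalityI, auto)

lemma nat_pow_Zl: "length x = l \<Longrightarrow> x [^]\<^bsub>Zl l\<^esub> (n::nat) = vec_smult (int n) x"
proof (induction n)
  case 0
  then show ?case by simp (intro nth_equalityI, auto)
next
  case (Suc n)
  then show ?case using vec_smult_Suc[of n x, symmetric] by simp
qed

lemma int_lattice_iff_subgroup: "int_lattice l H \<longleftrightarrow> subgroup H (Zl l)"
proof
  assume L: "int_lattice l H"
  show "subgroup H (Zl l)"
    by (rule group.subgroupI[OF group_Zl]) (use L in \<open>auto simp: int_lattice_def inv_Zl\<close>)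
next
  assume "subgroup H (Zl l)"
  then show "int_lattice l H"
    unfolding int_lattice_def
    using subgroup.subset[of H "Zl l"] subgroup.one_closed[of H "Zl l"]
      subgroup.m_closed[of H "Zl l"] subgroup.m_inv_closed[of H "Zl l"] inv_Zl
    by fastforce
qed

lemma int_lattice_lat_span:
  assumes "\<forall>a \<in> set A. length a = l" "I \<subseteq> {..<length A}"
  shows "int_lattice l (lat_span l A I)"
proof -
  have "(\<lambda>i. A ! i) ` I \<subseteq> carrier (Zl l)" using assms by auto
  then show ?thesis
    unfolding int_lattice_iff_subgroup lat_span_def
      by (rule group.generate_is_subgroup[OF group_Zl])
qed

lemma annihilates_lat_span_iff:
  assumes "\<forall>a \<in> set A. length a = l" "I \<subseteq> {..<length A}"
  shows "(\<forall>a\<in>lat_span l A I. dot l a x mod int q = 0) \<longleftrightarrow> (\<forall>i\<in>I. dot l (A!i) x mod int q = 0)"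
proof
  assume "\<forall>a\<in>lat_span l A I. dot l a x mod int q = 0"
  moreover have "A!i \<in> lat_span l A I" if "i \<in> I" for i
    unfolding lat_span_def using that by (intro generate.incl) simp
  ultimately show "\<forall>i\<in>I. dot l (A!i) x mod int q = 0" by blast
next
  assume gens: "\<forall>i\<in>I. dot l (A!i) x mod int q = 0"
  have sub: "(\<lambda>i. A ! i) ` I \<subseteq> carrier (Zl l)" using assms by auto
  show "\<forall>a\<in>lat_span l A I. dot l a x mod int q = 0"
    unfolding lat_span_def
  proof
    fix a assume "a \<in> generate (Zl l) ((\<lambda>i. A ! i) ` I)"
    then show "dot l a x mod int q = 0"
    proof (induction rule: generate.induct)
      case one
      then show ?case by (simp add: dot_def)
    next
      case (incl h)
      then show ?case using gens by auto
    next
      case (inv h)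
      then have lh: "length h = l" using assms by auto
      have "dot l (vec_neg h) x = - dot l h x" unfolding dot_def using lh by (simp add: sum_negf)
      then show ?case using inv_Zl[OF lh] gens inv by (auto simp: zmod_zminus1_eq_if)
    next
      case (eng h1 h2)
      then have "length h1 = l" "length h2 = l"
        using group.generate_in_carrier[OF group_Zl sub] by auto
      then have "dot l (vec_add h1 h2) x = dot l h1 x + dot l h2 x"
        unfolding dot_def by (simp add: sum.distrib algebra_simps)
      then show ?case using eng.IH by (simp add: mod_add_eq[symmetric])
    qed
  qed
qed

definition FactGroup_lift :: "('a, 'b) monoid_scheme \<Rightarrow> 'a set \<Rightarrow> ('a set \<Rightarrow> 'c) \<Rightarrow> 'a \<Rightarrow> 'c" where
  "FactGroup_lift G N H = restrict (\<lambda>x. H (N #>\<^bsub>G\<^esub> x)) (carrier G)"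

lemma inj_on_FactGroup_lift:
  assumes "N \<lhd> G"
  shows "inj_on (FactGroup_lift G N) (extensional (carrier (G Mod N)))"
proof (rule inj_onI)
  fix H1 H2 assume H: "H1 \<in> extensional (carrier (G Mod N))" "H2 \<in> extensional (carrier (G Mod N))"
    and eq: "FactGroup_lift G N H1 = FactGroup_lift G N H2"
  show "H1 = H2"
  proof (rule extensionalityI[OF H])
    fix C assume "C \<in> carrier (G Mod N)"
    then obtain x where "x \<in> carrier G" "C = N #>\<^bsub>G\<^esub> x" by (auto simp: carrier_FactGroup)
    then show "H1 C = H2 C" using fun_cong[OF eq, of x] by (simp add: FactGroup_lift_def)
  qed
qed

lemma FactGroup_lift_hom:
  assumes N: "N \<lhd> G" and K: "group K" and H: "H \<in> hom (G Mod N) K"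
  shows "FactGroup_lift G N H \<in> hom G K" and "x \<in> N \<Longrightarrow> FactGroup_lift G N H x = \<one>\<^bsub>K\<^esub>"
proof -
  interpret normal N G by (rule N)
  show "FactGroup_lift G N H \<in> hom G K"
    using hom_restrict[OF Group.hom_compose[OF r_coset_hom_Mod H]] by (simp add: FactGroup_lift_def)
  show "FactGroup_lift G N H x = \<one>\<^bsub>K\<^esub>" if "x \<in> N"
    using that rcos_const[OF is_group that] hom_one[OF H factorgroup_is_group K]
    by (auto simp: FactGroup_lift_def)
qed

lemma FactGroup_lift_surj:
  assumes N: "N \<lhd> G" and K: "group K" and h: "h \<in> hom G K" "h \<in> extensional (carrier G)"
    and hN: "\<forall>x\<in>N. h x = \<one>\<^bsub>K\<^esub>"
  obtains H where "H \<in> hom (G Mod N) K" "H \<in> extensional (carrier (G Mod N))"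
    "FactGroup_lift G N H = h"
proof -
  interpret normal N G by (rule N)
  have "group_hom G K h" "N \<subseteq> kernel G K h"
    using K h hN by (auto simp: group_hom_def group_hom_axioms_def kernel_def)
  then obtain H where H: "H \<in> hom (G Mod N) K" "\<And>x. x \<in> carrier G \<Longrightarrow> H (N #>\<^bsub>G\<^esub> x) = h x"
    using group_hom.FactGroup_universal_kernel[OF _ N] by metis
  have "restrict H (carrier (G Mod N)) \<in> hom (G Mod N) K"
    using group.hom_restrict[OF factorgroup_is_group H(1)] by simp
  moreover have "FactGroup_lift G N (restrict H (carrier (G Mod N))) = h"
    using h H(2) by (intro extensionalityI[of _ "carrier G"])
      (auto simp: FactGroup_lift_def carrier_FactGroup)
  ultimately show ?thesis using that by simp
qed

text \<open>The \<open>extensional\<close> restrictions make both sides honest finite sets of functions.\<close>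
lemma card_hom_FactGroup:
  assumes N: "N \<lhd> G" and K: "group K"
  shows "card (hom (G Mod N) K \<inter> extensional (carrier (G Mod N))) =
         card {h \<in> hom G K \<inter> extensional (carrier G). \<forall>x\<in>N. h x = \<one>\<^bsub>K\<^esub>}"
proof (rule bij_betw_same_card[of "FactGroup_lift G N"], unfold bij_betw_def, intro conjI)
  show "inj_on (FactGroup_lift G N) (hom (G Mod N) K \<inter> extensional (carrier (G Mod N)))"
    using inj_on_FactGroup_lift[OF N] by (rule inj_on_subset) simp
  show "FactGroup_lift G N ` (hom (G Mod N) K \<inter> extensional (carrier (G Mod N))) =
      {h \<in> hom G K \<inter> extensional (carrier G). \<forall>x\<in>N. h x = \<one>\<^bsub>K\<^esub>}"
  proof (intro equalityI subsetI)
    fix h assume "h \<in> FactGroup_lift G N ` (hom (G Mod N) K \<inter> extensional (carrier (G Mod N)))"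
    then obtain H where H: "H \<in> hom (G Mod N) K" and h: "h = FactGroup_lift G N H" by auto
    have "h \<in> extensional (carrier G)" unfolding h FactGroup_lift_def by simp
    then show "h \<in> {h \<in> hom G K \<inter> extensional (carrier G). \<forall>x\<in>N. h x = \<one>\<^bsub>K\<^esub>}"
      using FactGroup_lift_hom[OF N K H] h by simp
  next
    fix h assume "h \<in> {h \<in> hom G K \<inter> extensional (carrier G). \<forall>x\<in>N. h x = \<one>\<^bsub>K\<^esub>}"
    then have "h \<in> hom G K" "h \<in> extensional (carrier G)" "\<forall>x\<in>N. h x = \<one>\<^bsub>K\<^esub>" by auto
    then obtain H where "H \<in> hom (G Mod N) K" "H \<in> extensional (carrier (G Mod N))"
      "FactGroup_lift G N H = h"
      by (rule FactGroup_lift_surj[OF N K])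
    then show "h \<in> FactGroup_lift G N ` (hom (G Mod N) K \<inter> extensional (carrier (G Mod N)))" by blast
  qed
qed

section \<open>The torsion group of a diagonalized lattice\<close>

locale diagonalized =
  fixes l :: nat and L :: "int list set" and f g :: "int list \<Rightarrow> int list" and d :: "nat list"
  assumes L_lattice: "int_lattice l L" and fg_iso: "zlin_iso l f g"
    and d_length: "length d = l" and f_L: "f ` L = diag_lattice l d"
begin

definition tor :: "int list set" where
  "tor = {x. length x = l \<and> (\<exists>n::nat. n > 0 \<and> vec_smult (int n) x \<in> L)}"

definition tor_coords :: "int list set" where
  "tor_coords = {y. length y = l \<and> (\<forall>i<l. d!i = 0 \<longrightarrow> y!i = 0)}"

definition tor_exp :: nat where
  "tor_exp = (\<Prod>i<l. if d!i = 0 then 1 else d!i)"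

lemma f_linear: "zlinear l f" using fg_iso by (simp add: zlin_iso_def)
lemma g_linear: "zlinear l g" using fg_iso by (simp add: zlin_iso_def)
lemma g_f: "length x = l \<Longrightarrow> g (f x) = x" using fg_iso by (simp add: zlin_iso_def)
lemma f_g: "length x = l \<Longrightarrow> f (g x) = x" using fg_iso by (simp add: zlin_iso_def)

lemma mem_L_iff:
  assumes "length z = l"
  shows "z \<in> L \<longleftrightarrow> f z \<in> diag_lattice l d"
proof
  assume "f z \<in> diag_lattice l d"
  then obtain w where w: "w \<in> L" "f z = f w" using f_L by (metis imageE)
  then show "z \<in> L" using g_f[OF assms] g_f[OF int_lattice_length[OF L_lattice w(1)]] by metis
qed (use f_L in blast)

lemma tor_exp_pos: "tor_exp > 0" unfolding tor_exp_def by (intro prod_pos) auto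

lemma dvd_tor_exp: "i < l \<Longrightarrow> d!i \<noteq> 0 \<Longrightarrow> d!i dvd tor_exp"
  unfolding tor_exp_def using dvd_prodI[of "{..<l}" i "\<lambda>i. if d!i = 0 then 1 else d!i"] by simp

lemma tor_exp_smult_mem:
  assumes x: "length x = l" "f x \<in> tor_coords"
  shows "vec_smult (int tor_exp) x \<in> L"
proof -
  have len: "length (f x) = l" using zlinear_length[OF f_linear x(1)] .
  have "int (d!i) dvd int tor_exp * f x ! i" if "i < l" for i
    using that x(2) dvd_tor_exp[OF that] by (cases "d!i = 0") (simp_all add: tor_coords_def)
  then have "vec_smult (int tor_exp) (f x) \<in> diag_lattice l d"
    using len by (simp add: diag_lattice_def)
  then show ?thesis using mem_L_iff x(1) zlinear_smult[OF f_linear x(1)] by simp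
qed

lemma mem_tor_iff: "x \<in> tor \<longleftrightarrow> length x = l \<and> f x \<in> tor_coords"
proof
  assume "x \<in> tor"
  then obtain n :: nat where x: "length x = l" "n > 0" "vec_smult (int n) x \<in> L"
    by (auto simp: tor_def)
  then have "vec_smult (int n) (f x) \<in> diag_lattice l d"
    using mem_L_iff zlinear_smult[OF f_linear x(1)] by simp
  then show "length x = l \<and> f x \<in> tor_coords"
    using x zlinear_length[OF f_linear x(1)] by (auto simp: diag_lattice_def tor_coords_def)
qed (use tor_exp_smult_mem tor_exp_pos in \<open>auto simp: tor_def\<close>)

lemma tor_length: "x \<in> tor \<Longrightarrow> length x = l" by (simp add: mem_tor_iff)

lemma int_lattice_tor: "int_lattice l tor"
  unfolding int_lattice_def
proof (intro conjI ballI)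
  show "zero_vec l \<in> tor" using zlinear_zero[OF f_linear] by (simp add: mem_tor_iff tor_coords_def)
next
  fix x y assume "x \<in> tor" "y \<in> tor"
  then show "vec_add x y \<in> tor"
    using zlinear_add[OF f_linear] zlinear_length[OF f_linear]
      by (auto simp: mem_tor_iff tor_coords_def)
next
  fix x assume "x \<in> tor"
  then show "length x = l" "vec_neg x \<in> tor"
    using zlinear_neg[OF f_linear] zlinear_length[OF f_linear]
      by (auto simp: mem_tor_iff tor_coords_def)
qed

lemma L_subset_tor: "L \<subseteq> tor"
proof
  fix x assume x: "x \<in> L"
  have "vec_smult (int 1) x = x" by (intro nth_equalityI) auto
  then show "x \<in> tor" using x int_lattice_length[OF L_lattice x] unfolding tor_def by force
qed

lemma inverse_mem_tor: "y \<in> tor_coords \<Longrightarrow> g y \<in> tor"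
  using f_g zlinear_length[OF g_linear] by (auto simp: mem_tor_iff tor_coords_def)

lemma unit_vec_mem_tor_coords: "i < l \<Longrightarrow> d!i \<noteq> 0 \<Longrightarrow> unit_vec l i \<in> tor_coords"
  by (auto simp: tor_coords_def)

lemma vec_truncate_mem_tor_coords: "z \<in> tor_coords \<Longrightarrow> vec_truncate l n z \<in> tor_coords"
  by (auto simp: tor_coords_def vec_truncate_def)

abbreviation Tor :: "int list monoid" where
  "Tor \<equiv> (Zl l)\<lparr>carrier := tor\<rparr>"

lemma subgroup_tor: "subgroup tor (Zl l)"
  using int_lattice_tor by (simp add: int_lattice_iff_subgroup)

lemma group_Tor: "group Tor"
  using group.subgroup_imp_group[OF group_Zl subgroup_tor] .

lemma mult_Tor[simp]: "x \<otimes>\<^bsub>Tor\<^esub> y = vec_add x y" by (simp add: Zl_def vec_add_def)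
lemma one_Tor[simp]: "\<one>\<^bsub>Tor\<^esub> = zero_vec l" by (simp add: Zl_def zero_vec_def)

lemma normal_L_Tor: "L \<lhd> Tor"
proof -
  have "subgroup L Tor"
    using group.subgroup_incl[OF group_Zl _ subgroup_tor L_subset_tor] L_lattice
    by (simp add: int_lattice_iff_subgroup)
  moreover have "comm_group Tor"
    by (rule group.group_comm_groupI[OF group_Tor]) (auto intro!: nth_equalityI simp: tor_length)
  ultimately show ?thesis by (simp add: comm_group.subgroup_imp_normal)
qed

lemma inv_Tor: "x \<in> tor \<Longrightarrow> inv\<^bsub>Tor\<^esub> x = vec_neg x"
  by (rule group.inv_equality[OF group_Tor])
    (auto intro!: nth_equalityI simp: int_lattice_neg[OF int_lattice_tor] tor_length)

lemma nat_pow_Tor: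
  assumes "x \<in> tor"
  shows "x [^]\<^bsub>Tor\<^esub> (n::nat) = vec_smult (int n) x"
proof -
  have "x [^]\<^bsub>Tor\<^esub> n = x [^]\<^bsub>Zl l\<^esub> n"
    using monoid.nat_pow_consistent[OF group.is_monoid[OF group_Zl[of l]], of x n tor]
    by simp
  then show ?thesis using nat_pow_Zl[OF tor_length[OF assms]] by simp
qed

lemma int_pow_Tor:
  assumes x: "x \<in> tor"
  shows "x [^]\<^bsub>Tor\<^esub> (c::int) = vec_smult c x"
proof (cases "c < 0")
  case True
  have "x [^]\<^bsub>Tor\<^esub> c = inv\<^bsub>Tor\<^esub> (vec_smult (int (nat (- c))) x)"
    using True nat_pow_Tor[OF x] by (simp add: int_pow_def2)
  also have "\<dots> = vec_neg (vec_smult (int (nat (- c))) x)"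
    using inv_Tor int_lattice_smult[OF int_lattice_tor x] by simp
  also have "\<dots> = vec_smult c x" using True by (intro nth_equalityI) auto
  finally show ?thesis .
next
  case False
  have "x [^]\<^bsub>Tor\<^esub> c = x [^]\<^bsub>Tor\<^esub> (nat c)" using False by (simp only: int_pow_def2 if_False)
  also have "\<dots> = vec_smult (int (nat c)) x" by (rule nat_pow_Tor[OF x])
  finally show ?thesis using False by simp
qed

lemma diag_dvd_exponent:
  assumes i: "i < l" and nz: "d!i \<noteq> 0"
  shows "d!i dvd grp_exponent (Tor Mod L)"
proof -
  interpret normal L Tor by (rule normal_L_Tor)
  have pow: "(L #>\<^bsub>Tor\<^esub> x) [^]\<^bsub>Tor Mod L\<^esub> n = L #>\<^bsub>Tor\<^esub> vec_smult (int n) x"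
    if "x \<in> tor" for x and n :: nat
    using FactGroup_pow[of x n] nat_pow_Tor that by simp
  define E where "E = grp_exponent (Tor Mod L)"
  have kills: "\<forall>C\<in>carrier (Tor Mod L). C [^]\<^bsub>Tor Mod L\<^esub> tor_exp = \<one>\<^bsub>Tor Mod L\<^esub>"
    using pow tor_exp_smult_mem rcos_const[OF group_Tor]
    by (auto simp: carrier_FactGroup mem_tor_iff)
  have "E > 0 \<and> (\<forall>C\<in>carrier (Tor Mod L). C [^]\<^bsub>Tor Mod L\<^esub> E = \<one>\<^bsub>Tor Mod L\<^esub>)"
    unfolding E_def grp_exponent_def by (rule LeastI_ex) (use tor_exp_pos kills in blast)
  then have E: "\<forall>C\<in>carrier (Tor Mod L). C [^]\<^bsub>Tor Mod L\<^esub> E = \<one>\<^bsub>Tor Mod L\<^esub>" ..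
  define x where "x = g (unit_vec l i)"
  have x: "x \<in> tor" unfolding x_def using inverse_mem_tor[OF unit_vec_mem_tor_coords[OF i nz]] .
  then have "L #>\<^bsub>Tor\<^esub> x \<in> carrier (Tor Mod L)" by (simp add: carrier_FactGroup)
  then have "(L #>\<^bsub>Tor\<^esub> x) [^]\<^bsub>Tor Mod L\<^esub> E = L" using E by simp
  then have "L #>\<^bsub>Tor\<^esub> vec_smult (int E) x = L" using pow[OF x] by simp
  moreover have "vec_smult (int E) x \<in> L #>\<^bsub>Tor\<^esub> vec_smult (int E) x"
    using group.rcos_self[OF group_Tor _ subgroup_axioms] int_lattice_smult[OF int_lattice_tor x]
      by simp
  ultimately have "f (vec_smult (int E) x) \<in> diag_lattice l d" using f_L by auto
  moreover have "f (vec_smult (int E) x) = vec_smult (int E) (unit_vec l i)"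
    using zlinear_smult[OF f_linear] f_g zlinear_length[OF g_linear] unfolding x_def by simp
  ultimately have "int (d!i) dvd int E" using i by (auto simp: diag_lattice_def)
  then show ?thesis unfolding E_def by simp
qed

text \<open>A homomorphism \<open>tor \<rightarrow> \<int>/k\<close> killing L is determined by its values \<open>a\<^sub>i\<close> on the vectors
  \<open>g e\<^sub>i\<close> with \<open>d\<^sub>i \<noteq> 0\<close>, and these values range exactly over the solutions of \<open>d\<^sub>i a\<^sub>i \<equiv> 0 (mod k)\<close>.\<close>

definition hom_coord :: "nat \<Rightarrow> nat \<Rightarrow> int set" where
  "hom_coord k i = {a. 0 \<le> a \<and> a < int k \<and> (d!i = 0 \<longrightarrow> a = 0) \<and> (int (d!i) * a) mod int k = 0}"

definition hom_coords :: "nat \<Rightarrow> int list set" where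
  "hom_coords k = {y. length y = l \<and> (\<forall>i<l. y!i \<in> hom_coord k i)}"

definition homs_killing_L :: "nat \<Rightarrow> (int list \<Rightarrow> int) set" where
  "homs_killing_L k = {h \<in> hom Tor (integer_mod_group k) \<inter> extensional tor. \<forall>x\<in>L. h x = 0}"

definition hom_values :: "(int list \<Rightarrow> int) \<Rightarrow> int list" where
  "hom_values h = map (\<lambda>i. if d!i = 0 then 0 else h (g (unit_vec l i))) [0..<l]"

definition hom_of_values :: "nat \<Rightarrow> int list \<Rightarrow> int list \<Rightarrow> int" where
  "hom_of_values k y = restrict (\<lambda>x. (\<Sum>i<l. f x ! i * y!i) mod int k) tor"

lemma card_hom_coords:
  assumes k: "k > 0"
  shows "card (hom_coords k) = (\<Prod>i<l. if d!i = 0 then 1 else gcd (d!i) k)"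
proof -
  have "card (hom_coord k i) = (if d!i = 0 then 1 else gcd (d!i) k)" for i
  proof (cases "d!i = 0")
    case True
    then have "hom_coord k i = {0}" using k by (auto simp: hom_coord_def)
    then show ?thesis using True by simp
  next
    case False
    then have "hom_coord k i = mult_kernel_mod (d!i) k"
      by (auto simp: hom_coord_def mult_kernel_mod_def)
    then show ?thesis using card_mult_kernel_mod[OF k, of "d!i"] False by simp
  qed
  moreover have "finite (hom_coord k i)" for i
    by (rule finite_subset[of _ "{0..<int k}"]) (auto simp: hom_coord_def)
  ultimately show ?thesis unfolding hom_coords_def by (simp add: card_lists_nth_in)
qed

context
  fixes k :: nat
  assumes k: "k > 0"
begin

lemma hom_range: "h \<in> hom Tor (integer_mod_group k) \<Longrightarrow> x \<in> tor \<Longrightarrow> 0 \<le> h x \<and> h x < int k"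
  using hom_in_carrier[of h Tor "integer_mod_group k" x] k by (auto simp: carrier_integer_mod_group)

lemma hom_add_mod:
  "h \<in> hom Tor (integer_mod_group k) \<Longrightarrow> x \<in> tor \<Longrightarrow> y \<in> tor \<Longrightarrow> h (vec_add x y) = (h x + h y) mod int k"
  using hom_mult[of h Tor "integer_mod_group k" x y] by simp

lemma hom_zero: "h \<in> hom Tor (integer_mod_group k) \<Longrightarrow> h (zero_vec l) = 0"
  using hom_one[of h Tor "integer_mod_group k"] group_Tor by simp

lemma hom_smult_mod:
  assumes h: "h \<in> hom Tor (integer_mod_group k)" and x: "x \<in> tor"
  shows "h (vec_smult c x) = (c * h x) mod int k"
proof -
  have "h (x [^]\<^bsub>Tor\<^esub> c) = (h x) [^]\<^bsub>integer_mod_group k\<^esub> c"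
    using hom_int_pow[OF h _ group_Tor group_integer_mod_group] x by simp
  then show ?thesis using int_pow_Tor[OF x] by (simp add: int_pow_integer_mod_group)
qed

lemma hom_eq_sum_hom_values:
  assumes h: "h \<in> hom Tor (integer_mod_group k)" and x: "x \<in> tor"
  shows "h x = (\<Sum>i<l. f x ! i * hom_values h ! i) mod int k"
proof -
  define z where "z = f x"
  have z: "z \<in> tor_coords" using x by (simp add: mem_tor_iff z_def)
  have partial: "n \<le> l \<Longrightarrow> h (g (vec_truncate l n z)) =
      (\<Sum>i<n. z ! i * hom_values h ! i) mod int k" for n
  proof (induction n)
    case 0
    then show ?case using zlinear_zero[OF g_linear] hom_zero[OF h] by (simp add: vec_truncate_0)
  next
    case (Suc n)
    then have n: "n < l" by simp
    show ?case
    proof (cases "d!n = 0")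
      case True
      then have "vec_truncate l (Suc n) z = vec_truncate l n z"
        using z n by (intro nth_equalityI) (auto simp: vec_truncate_def less_Suc_eq tor_coords_def)
      then show ?thesis using Suc True z n by (simp add: tor_coords_def)
    next
      case False
      have gz: "g (vec_truncate l n z) \<in> tor"
        using inverse_mem_tor[OF vec_truncate_mem_tor_coords[OF z]] .
      have ge: "g (unit_vec l n) \<in> tor"
        using inverse_mem_tor[OF unit_vec_mem_tor_coords[OF n False]] .
      have "g (vec_truncate l (Suc n) z) =
          vec_add (g (vec_truncate l n z)) (vec_smult (z!n) (g (unit_vec l n)))"
        using vec_truncate_Suc[OF n] zlinear_add[OF g_linear] zlinear_smult[OF g_linear] by simp
      then have "h (g (vec_truncate l (Suc n) z)) =
          (h (g (vec_truncate l n z)) + (z!n * h (g (unit_vec l n))) mod int k) mod int k"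
        using hom_add_mod[OF h gz int_lattice_smult[OF int_lattice_tor ge]] hom_smult_mod[OF h ge]
          by simp
      then show ?thesis using Suc n False by (simp add: hom_values_def mod_add_eq)
    qed
  qed
  have "vec_truncate l l z = z"
    by (rule vec_truncate_full) (use z in \<open>simp add: tor_coords_def\<close>)
  then show ?thesis using partial[of l] g_f[OF tor_length[OF x]] by (simp add: z_def)
qed

lemma hom_values_mem:
  assumes h: "h \<in> homs_killing_L k"
  shows "hom_values h \<in> hom_coords k"
proof -
  have hh: "h \<in> hom Tor (integer_mod_group k)" and hL: "\<forall>x\<in>L. h x = 0"
    using h by (auto simp: homs_killing_L_def)
  have "hom_values h ! i \<in> hom_coord k i" if i: "i < l" for i
  proof (cases "d!i = 0")
    case True
    then show ?thesis using i k by (simp add: hom_values_def hom_coord_def)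
  next
    case False
    have ge: "g (unit_vec l i) \<in> tor"
      using inverse_mem_tor[OF unit_vec_mem_tor_coords[OF i False]] .
    have "vec_smult (int (d!i)) (unit_vec l i) \<in> diag_lattice l d" using i
      by (auto simp: diag_lattice_def)
    then have "g (vec_smult (int (d!i)) (unit_vec l i)) \<in> L"
      using mem_L_iff[of "g (vec_smult (int (d!i)) (unit_vec l i))"] f_g zlinear_length[OF g_linear]
      by simp
    then have "h (vec_smult (int (d!i)) (g (unit_vec l i))) = 0" using hL zlinear_smult[OF g_linear]
      by simp
    then have "(int (d!i) * h (g (unit_vec l i))) mod int k = 0" using hom_smult_mod[OF hh ge]
      by simp
    then show ?thesis using i False hom_range[OF hh ge] by (simp add: hom_values_def hom_coord_def)
  qed
  then show ?thesis by (simp add: hom_coords_def hom_values_def)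
qed

lemma hom_of_values_mem:
  assumes y: "y \<in> hom_coords k"
  shows "hom_of_values k y \<in> homs_killing_L k"
proof -
  have yP: "\<forall>i<l. y!i \<in> hom_coord k i" using y by (auto simp: hom_coords_def)
  have "hom_of_values k y \<in> hom Tor (integer_mod_group k)"
  proof (rule homI)
    fix x assume "x \<in> carrier Tor"
    then show "hom_of_values k y x \<in> carrier (integer_mod_group k)"
      using k by (simp add: hom_of_values_def carrier_integer_mod_group)
  next
    fix x x' assume "x \<in> carrier Tor" "x' \<in> carrier Tor"
    then have xs: "x \<in> tor" "x' \<in> tor" and lx: "length x = l" "length x' = l"
      using tor_length by auto
    have "(\<Sum>i<l. f (vec_add x x') ! i * y!i) = (\<Sum>i<l. f x ! i * y!i) + (\<Sum>i<l. f x' ! i * y!i)"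
      using zlinear_add[OF f_linear lx] zlinear_length[OF f_linear] lx
      by (simp add: sum.distrib[symmetric] algebra_simps)
    then show "hom_of_values k y (x \<otimes>\<^bsub>Tor\<^esub> x') =
        hom_of_values k y x \<otimes>\<^bsub>integer_mod_group k\<^esub> hom_of_values k y x'"
      using xs int_lattice_add[OF int_lattice_tor xs] by (simp add: hom_of_values_def mod_add_eq)
  qed
  moreover have "hom_of_values k y x = 0" if x: "x \<in> L" for x
  proof -
    have "(f x ! i * y!i) mod int k = 0" if i: "i < l" for i
    proof -
      have "f x \<in> diag_lattice l d" using x f_L by blast
      then obtain t where t: "f x ! i = int (d!i) * t" using i by (auto simp: diag_lattice_def)
      have "(f x ! i * y!i) mod int k = (t * ((int (d!i) * y!i) mod int k)) mod int k"
        by (simp add: t mod_mult_right_eq algebra_simps)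
      then show ?thesis using yP i by (simp add: hom_coord_def)
    qed
    then have "(\<Sum>i<l. (f x ! i * y!i) mod int k) mod int k = 0" by simp
    moreover have "x \<in> tor" using x L_subset_tor by blast
    ultimately show ?thesis by (simp add: hom_of_values_def mod_sum_eq)
  qed
  moreover have "hom_of_values k y \<in> extensional tor" by (simp add: hom_of_values_def)
  ultimately show ?thesis by (simp add: homs_killing_L_def)
qed

lemma hom_values_hom_of_values:
  assumes y: "y \<in> hom_coords k"
  shows "hom_values (hom_of_values k y) = y"
proof (rule nth_equalityI)
  have yP: "\<forall>i<l. y!i \<in> hom_coord k i" using y by (auto simp: hom_coords_def)
  show "length (hom_values (hom_of_values k y)) = length y" using y
    by (simp add: hom_values_def hom_coords_def)
  fix i assume "i < length (hom_values (hom_of_values k y))"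
  then have i: "i < l" by (simp add: hom_values_def)
  show "hom_values (hom_of_values k y) ! i = y ! i"
  proof (cases "d!i = 0")
    case True
    then show ?thesis using yP i by (simp add: hom_values_def hom_coord_def)
  next
    case False
    have "(\<Sum>j<l. f (g (unit_vec l i)) ! j * y!j) = y!i"
      using f_g dot_unit_vec[OF i] by (simp add: dot_def)
    then have "hom_of_values k y (g (unit_vec l i)) = y!i mod int k"
      using inverse_mem_tor[OF unit_vec_mem_tor_coords[OF i False]] by (simp add: hom_of_values_def)
    also have "\<dots> = y!i" using yP i by (simp add: hom_coord_def)
    finally show ?thesis using i False by (simp add: hom_values_def)
  qed
qed

lemma hom_of_values_hom_values:
  assumes h: "h \<in> homs_killing_L k"
  shows "hom_of_values k (hom_values h) = h"
proof (rule extensionalityI)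
  show "hom_of_values k (hom_values h) \<in> extensional tor" by (simp add: hom_of_values_def)
  show "h \<in> extensional tor" using h by (simp add: homs_killing_L_def)
  fix x assume "x \<in> tor"
  then show "hom_of_values k (hom_values h) x = h x"
    using hom_eq_sum_hom_values h by (simp add: hom_of_values_def homs_killing_L_def)
qed

lemma card_homs_killing_L: "card (homs_killing_L k) = card (hom_coords k)"
proof -
  have "bij_betw hom_values (homs_killing_L k) (hom_coords k)"
    by (rule bij_betw_byWitness[where f' = "hom_of_values k"])
      (auto simp: hom_values_mem hom_of_values_mem hom_values_hom_of_values hom_of_values_hom_values)
  then show ?thesis by (rule bij_betw_same_card)
qed

end

lemma card_hom_tor_quotient:
  assumes k: "k > 0"
  shows "card (hom (Tor Mod L) (integer_mod_group k) \<inter> extensional (carrier (Tor Mod L))) =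
         (\<Prod>i<l. if d!i = 0 then 1 else gcd (d!i) k)"
proof -
  have "card (hom (Tor Mod L) (integer_mod_group k) \<inter> extensional (carrier (Tor Mod L))) =
      card (homs_killing_L k)"
    using card_hom_FactGroup[OF normal_L_Tor group_integer_mod_group[of k]]
    by (simp add: homs_killing_L_def)
  then show ?thesis using card_homs_killing_L[OF k] card_hom_coords[OF k] by simp
qed

lemma card_annihilator_mod:
  assumes q: "q > 0"
  shows "card (annihilator_mod l q L) = (\<Prod>i<l. gcd (d!i) q)"
proof -
  have "\<forall>b\<in>L. length b = l" using int_lattice_length[OF L_lattice] by blast
  then have "card (annihilator_mod l q (f ` L)) = card (annihilator_mod l q L)"
    by (rule card_annihilator_mod_image[OF fg_iso _ q])
  then show ?thesis using card_annihilator_mod_diag_lattice[OF q] f_L by simp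
qed

lemma card_annihilator_mod_eq:
  assumes q: "q > 0" and gcd_eq: "\<And>i. i < l \<Longrightarrow> d!i \<noteq> 0 \<Longrightarrow> gcd (d!i) q = gcd (d!i) k"
  shows "card (annihilator_mod l q L) =
           (\<Prod>i<l. if d!i = 0 then 1 else gcd (d!i) k) * q ^ (l - zrank l L)"
proof -
  have split: "(\<Prod>i<l. if d!i = 0 then a else b i) =
      a ^ card {i. i < l \<and> d!i = 0} * (\<Prod>i\<in>{i. i < l \<and> d!i \<noteq> 0}. b i)" for a :: nat and b
  proof -
    have "{..<l} \<inter> {i. d!i = 0} = {i. i < l \<and> d!i = 0}"
      "{..<l} \<inter> - {i. d!i = 0} = {i. i < l \<and> d!i \<noteq> 0}"
      by auto
    then show ?thesis by (simp add: prod.If_cases)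
  qed
  have "card {i. i < l \<and> d!i = 0} + card {i. i < l \<and> d!i \<noteq> 0} = l"
    by (subst card_Un_disjoint[symmetric])
      (auto intro: arg_cong[where f = card, of _ "{..<l}", simplified])
  then have "card {i. i < l \<and> d!i = 0} = l - zrank l L"
    using zrank_diagonalized[OF fg_iso L_lattice f_L] by simp
  moreover have "(\<Prod>i<l. gcd (d!i) q) = (\<Prod>i<l. if d!i = 0 then q else gcd (d!i) k)"
    by (rule prod.cong) (auto simp: gcd_eq)
  ultimately show ?thesis using card_annihilator_mod[OF q] split[of q] split[of 1] by simp
qed

end
section \<open>The constituents of the characteristic quasi-polynomial\<close>

lemma gcd_eq_if_mod_eq:
  fixes d q k r :: nat
  assumes "d dvd r" "q mod r = k mod r"
  shows "gcd d q = gcd d k"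
proof -
  have "gcd d q = gcd d (q mod d)" by (metis gcd.commute gcd_red_nat)
  also have "q mod d = k mod d" using assms by (metis mod_mod_cancel)
  also have "gcd d (k mod d) = gcd d k" by (metis gcd.commute gcd_red_nat)
  finally show ?thesis .
qed

lemma card_annihilator_lat_span:
  assumes lenA: "\<forall>a \<in> set A. length a = l" and I: "I \<subseteq> {..<length A}"
    and k: "k > 0" and q: "q > 0" and qk: "q mod rho l A = k mod rho l A"
  shows "card (annihilator_mod l q (lat_span l A I)) = m_hom l A I k * q ^ (l - rank_S l A I)"
proof -
  define L where "L = lat_span l A I"
  have L: "int_lattice l L" unfolding L_def using int_lattice_lat_span[OF lenA I] .
  obtain f g d where "zlin_iso l f g" "length d = l" "f ` L = diag_lattice l d"
    using int_lattice_diagonalization[OF L] by blast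
  then interpret diagonalized l L f g d using L by unfold_locales
  have "tor_part l A I = {x. length x = l \<and> (\<exists>n::nat. n > 0 \<and> vec_smult (int n) x \<in> L)}"
    unfolding tor_part_def L_def using nat_pow_Zl by auto
  then have "tor_part l A I = tor" using tor_def by simp
  then have tor_group: "tor_group l A I = Tor Mod L" unfolding tor_group_def L_def by simp
  have "gcd (d!i) q = gcd (d!i) k" if "i < l" "d!i \<noteq> 0" for i
  proof (rule gcd_eq_if_mod_eq[OF _ qk])
    have "d!i dvd grp_exponent (tor_group l A I)" using diag_dvd_exponent[OF that] tor_group by simp
    also have "grp_exponent (tor_group l A I) dvd rho l A"
      unfolding rho_def using I by (intro dvd_Lcm) blast
    finally show "d!i dvd rho l A" .
  qed
  then show ?thesis
    using card_annihilator_mod_eq[OF q] card_hom_tor_quotient[OF k]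
    unfolding m_hom_def rank_S_def tor_group L_def zrank_def by simp
qed

lemma int_card_avoiding_all:
  fixes P :: "nat \<Rightarrow> 'a \<Rightarrow> bool"
  assumes U: "finite U"
  shows "int (card {x\<in>U. \<forall>i<n. \<not> P i x}) =
           (\<Sum>I\<in>Pow {..<n}. (-1) ^ card I * int (card {x\<in>U. \<forall>i\<in>I. P i x}))"
proof -
  define X where "X i = {x\<in>U. P i x}" for i
  interpret Incl_Excl finite "int \<circ> card"
    by unfold_locales (auto simp: card_Un_disjnt)
  have "(int \<circ> card) (\<Union>(X ` {..<n})) =
      (\<Sum>I | I \<subseteq> {..<n} \<and> I \<noteq> {}. (-1) ^ (card I + 1) * (int \<circ> card) (\<Inter>(X ` I)))"
    by (rule restricted_indexed) (use U in \<open>simp_all add: X_def\<close>)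
  then have union: "int (card (\<Union>(X ` {..<n}))) =
      (\<Sum>I | I \<subseteq> {..<n} \<and> I \<noteq> {}. (-1) ^ (card I + 1) * int (card (\<Inter>(X ` I))))"
    by simp
  have sub: "\<Union>(X ` {..<n}) \<subseteq> U" by (auto simp: X_def)
  have "{x\<in>U. \<forall>i<n. \<not> P i x} = U - \<Union>(X ` {..<n})" by (auto simp: X_def)
  then have "int (card {x\<in>U. \<forall>i<n. \<not> P i x}) = int (card U) - int (card (\<Union>(X ` {..<n})))"
    using card_Diff_subset[OF finite_subset[OF sub U] sub] card_mono[OF U sub] by (simp add: of_nat_diff)
  also have "\<dots> = (\<Sum>I\<in>insert {} {I. I \<subseteq> {..<n} \<and> I \<noteq> {}}.
      (-1) ^ card I * int (card {x\<in>U. \<forall>i\<in>I. P i x}))"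
  proof -
    have "(\<Sum>I | I \<subseteq> {..<n} \<and> I \<noteq> {}. (-1) ^ card I * int (card (\<Inter>(X ` I)))) =
        (\<Sum>I | I \<subseteq> {..<n} \<and> I \<noteq> {}. (-1) ^ card I * int (card {x\<in>U. \<forall>i\<in>I. P i x}))"
    proof (rule sum.cong)
      fix I assume "I \<in> {I. I \<subseteq> {..<n} \<and> I \<noteq> {}}"
      then have "\<Inter>(X ` I) = {x\<in>U. \<forall>i\<in>I. P i x}" by (auto simp: X_def)
      then show "(-1) ^ card I * int (card (\<Inter>(X ` I))) =
          (-1) ^ card I * int (card {x\<in>U. \<forall>i\<in>I. P i x})"
        by simp
    qed simp
    then show ?thesis unfolding union by (simp add: sum_negf)
  qed
  also have "insert {} {I. I \<subseteq> {..<n} \<and> I \<noteq> {}} = Pow {..<n}" by auto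
  finally show ?thesis .
qed

lemma int_M_card_inclusion_exclusion:
  "int (M_card l A q) =
     (\<Sum>I\<in>Pow {..<length A}. (-1) ^ card I *
        int (card {x. length x = l \<and> set x \<subseteq> {0..<int q} \<and> (\<forall>i\<in>I. dot l (A!i) x mod int q = 0)}))"
proof -
  define U where "U = {x :: int list. length x = l \<and> set x \<subseteq> {0..<int q}}"
  have "finite U"
    unfolding U_def using finite_lists_length_eq[of "{0..<int q}" l] by (simp add: conj_commute)
  moreover have "M_card l A q = card {x\<in>U. \<forall>i<length A. \<not> dot l (A!i) x mod int q = 0}"
    unfolding M_card_def U_def dot_def by (simp add: all_set_conv_all_nth conj_assoc)
  ultimately have "int (M_card l A q) =
      (\<Sum>I\<in>Pow {..<length A}. (-1) ^ card I * int (card {x\<in>U. \<forall>i\<in>I. dot l (A!i) x mod int q = 0}))"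
    using int_card_avoiding_all[of U "length A" "\<lambda>i x. dot l (A!i) x mod int q = 0"] by simp
  moreover have "{x\<in>U. \<forall>i\<in>I. dot l (A!i) x mod int q = 0} =
      {x. length x = l \<and> set x \<subseteq> {0..<int q} \<and> (\<forall>i\<in>I. dot l (A!i) x mod int q = 0)}" for I
    by (auto simp: U_def)
  ultimately show ?thesis by simp
qed

theorem mainTheorem11:
  fixes l :: nat and A :: "int list list" and k :: nat
  assumes "\<forall>a \<in> set A. length a = l"
    and "k > 0" and "k dvd rho l A"
  shows "\<forall>q::nat. q > 0 \<and> q mod rho l A = k mod rho l A \<longrightarrow>
           int (M_card l A q) = chi l A k (int q)"
proof (intro allI impI)
  fix q :: nat
  assume q: "q > 0 \<and> q mod rho l A = k mod rho l A"
  show "int (M_card l A q) = chi l A k (int q)"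
    unfolding int_M_card_inclusion_exclusion chi_def
  proof (rule sum.cong)
    fix I assume I: "I \<in> Pow {..<length A}"
    then have "{x. length x = l \<and> set x \<subseteq> {0..<int q} \<and> (\<forall>i\<in>I. dot l (A!i) x mod int q = 0)} =
        annihilator_mod l q (lat_span l A I)"
      using annihilates_lat_span_iff[OF assms(1)] by (auto simp: annihilator_mod_def)
    then show "(-1) ^ card I *
          int (card {x. length x = l \<and> set x \<subseteq> {0..<int q} \<and> (\<forall>i\<in>I. dot l (A!i) x mod int q = 0)}) =
        (-1) ^ card I * int (m_hom l A I k) * int q ^ (l - rank_S l A I)"
      using card_annihilator_lat_span[OF assms(1) _ assms(2)] I q by simp
  qed simp
qed

end
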